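(* Let $a,b\in\mathbb{R}\setminus\{0\}$, let $\nu_1,\nu_2:\mathbb{R}^2\to\mathbb{R}$ be smooth, and consider the two-parameter family of Hamiltonians on $(\mathbb{R}^2, dq\wedge dp)$ $$H_{j,t}(q,p)=\frac{a}{2}p^2+\frac{b}{6}q^6+\frac{\nu_1(j,t)}{2}q^2+\frac{\nu_2(j,t)}{4}q^4,$$ where $\nu_1$ satisfies $$\nu_1(0,0)=0,\qquad \frac{\partial \nu_1}{\partial j}(0,0)=0,\qquad \frac{\partial^2 \nu_1}{\partial j^2}(0,0)\neq 0,\qquad \frac{\partial \nu_1}{\partial t}(0,0)\neq 0.$$ Fix $\tau\in\mathbb{R}$ sufficiently close to $0$, and let $j_0^{\pm}=j_0^{\pm}(\tau)$ be real numbers with $\nu_1(j_0^{\pm},\tau)=0$, and assume $\nu_2(j_0^{\pm},\tau)\neq 0$. Then Hamiltonian flip bifurcations (with respect to $j$, at fixed $t=\tau$) of the singularity at the origin occur at $(j,t)=(j_0^{\pm},\tau)$. If $a\,\nu_2(j_0^{\pm},\tau)<0$ the bifurcation is dual, and if $a\,\nu_2(j_0^{\pm},\tau)>0$ it is not dual.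
   Context: A singular point $x$ is stable (in the sense of Lyapunov) if all points in a sufficiently small neighbourhood of $x$ remain close to $x$ under the flow for all time; otherwise it is unstable. It is a centre if all eigenvalues of the linearised system are non-zero and purely imaginary, and a saddle if the linearisation has no purely imaginary eigenvalues ($0$ counted as purely imaginary). The systems are considered modulo the $\mathbb{Z}_2$-action $(q,p)\mapsto(-q,-p)$ (equivalently on the reduced phase space, the cone $\{(u,v,w): 4uv=w^2,\ u,v\ge0\}$ with $u=q^2/2$, $v=p^2/2$, $w=qp$, whose apex corresponds to the origin). Hamiltonian flip bifurcation (for a family depending on a parameter $j$, with the origin a singular point): if the origin is stable and becomes unstable as $j$ passes through $j_0$, while at the same time an additional singularity which is a centre is produced, the origin undergoes a Hamiltonian flip bifurcation at $j=j_0$. If the origin is unstable and becomes stable as $j$ passes through $j_0$, while at the same time an additional singularity which is a saddle is produced, it undergoes a dual Hamiltonian flip bifurcation at $j=j_0$. *)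

theory Defs
  imports "HOL-Analysis.Analysis"
begin

fun Ck2 :: "nat \<Rightarrow> (real \<Rightarrow> real \<Rightarrow> real) \<Rightarrow> bool" where
  "Ck2 0 f = continuous_on UNIV (\<lambda>z. f (fst z) (snd z))"
| "Ck2 (Suc k) f = (continuous_on UNIV (\<lambda>z. f (fst z) (snd z)) \<and>
     (\<exists>f1 f2. (\<forall>x y. ((\<lambda>s. f s y) has_real_derivative f1 x y) (at x) \<and>
                      ((\<lambda>s. f x s) has_real_derivative f2 x y) (at y))
             \<and> Ck2 k f1 \<and> Ck2 k f2))"

definition smooth2 :: "(real \<Rightarrow> real \<Rightarrow> real) \<Rightarrow> bool" where
  "smooth2 f \<longleftrightarrow> (\<forall>k. Ck2 k f)"

definition H_fam :: "real \<Rightarrow> real \<Rightarrow> (real \<Rightarrow> real \<Rightarrow> real) \<Rightarrow> (real \<Rightarrow> real \<Rightarrow> real)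
    \<Rightarrow> real \<Rightarrow> real \<Rightarrow> real \<times> real \<Rightarrow> real" where
  "H_fam a b \<nu>1 \<nu>2 j t = (\<lambda>(q, p). a / 2 * p ^ 2 + b / 6 * q ^ 6
        + \<nu>1 j t / 2 * q ^ 2 + \<nu>2 j t / 4 * q ^ 4)"

definition ham_vf :: "(real \<times> real \<Rightarrow> real) \<Rightarrow> real \<times> real \<Rightarrow> real \<times> real" where
  "ham_vf H = (\<lambda>z. (deriv (\<lambda>p. H (fst z, p)) (snd z), - deriv (\<lambda>q. H (q, snd z)) (fst z)))"

definition lyap_stable :: "(real \<times> real \<Rightarrow> real \<times> real) \<Rightarrow> real \<times> real \<Rightarrow> bool" where
  "lyap_stable F x0 \<longleftrightarrow> (\<forall>\<epsilon>>0. \<exists>\<delta>>0. \<forall>s T y. s \<le> 0 \<and> 0 \<le> T \<and>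
      (\<forall>t\<in>{s..T}. (y has_vector_derivative F (y t)) (at t within {s..T})) \<and>
      dist (y 0) x0 < \<delta> \<longrightarrow> (\<forall>t\<in>{s..T}. dist (y t) x0 < \<epsilon>))"

text \<open>Eigenvalues of the linearisation (complexified Jacobian) of F at x.\<close>
definition lin_eigenvalues :: "(real \<times> real \<Rightarrow> real \<times> real) \<Rightarrow> real \<times> real \<Rightarrow> complex set" where
  "lin_eigenvalues F x = {e. \<exists>L v1 v2. (F has_derivative L) (at x) \<and> (v1, v2) \<noteq> (0, 0) \<and>
      of_real (fst (L (1, 0))) * v1 + of_real (fst (L (0, 1))) * v2 = e * v1 \<and>
      of_real (snd (L (1, 0))) * v1 + of_real (snd (L (0, 1))) * v2 = e * v2}"

definition is_centre :: "(real \<times> real \<Rightarrow> real \<times> real) \<Rightarrow> real \<times> real \<Rightarrow> bool" where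
  "is_centre F x \<longleftrightarrow> F differentiable (at x) \<and>
      (\<forall>e\<in>lin_eigenvalues F x. e \<noteq> 0 \<and> Re e = 0)"

definition is_saddle :: "(real \<times> real \<Rightarrow> real \<times> real) \<Rightarrow> real \<times> real \<Rightarrow> bool" where
  "is_saddle F x \<longleftrightarrow> F differentiable (at x) \<and>
      (\<forall>e\<in>lin_eigenvalues F x. Re e \<noteq> 0)"

text \<open>(Dual) Hamiltonian flip bifurcation of the origin at j = j0 for the family F j.
  sigma = 1 or -1 encodes the direction in which j passes through j0.
  Nonzero singular points of the Z2-equivariant field on R^2 represent the singular points of the
  reduced system on the cone other than the apex.\<close>
definition flip_bif :: "bool \<Rightarrow> (real \<Rightarrow> real \<times> real \<Rightarrow> real \<times> real) \<Rightarrow> real \<Rightarrow> bool" where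
  "flip_bif dual F j0 \<longleftrightarrow> (\<forall>j. F j 0 = 0) \<and>
     (\<exists>\<epsilon>>0. \<exists>r>0. \<exists>\<sigma>\<in>{-1, 1::real}.
        (\<forall>j. 0 < \<sigma> * (j0 - j) \<and> \<sigma> * (j0 - j) < \<epsilon> \<longrightarrow>
             (lyap_stable (F j) 0 \<longleftrightarrow> \<not> dual) \<and> (\<forall>x. x \<noteq> 0 \<and> norm x < r \<longrightarrow> F j x \<noteq> 0)) \<and>
        (\<forall>j. 0 < \<sigma> * (j - j0) \<and> \<sigma> * (j - j0) < \<epsilon> \<longrightarrow> (lyap_stable (F j) 0 \<longleftrightarrow> dual)) \<and>
        (\<exists>c. (\<forall>j. 0 < \<sigma> * (j - j0) \<and> \<sigma> * (j - j0) < \<epsilon> \<longrightarrow>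
                 c j \<noteq> 0 \<and> F j (c j) = 0 \<and>
                 (if dual then is_saddle (F j) (c j) else is_centre (F j) (c j))) \<and>
             (c \<longlongrightarrow> 0) (at j0 within {j. 0 < \<sigma> * (j - j0)})))"

abbreviation "hamiltonian_flip \<equiv> flip_bif False"
abbreviation "dual_hamiltonian_flip \<equiv> flip_bif True"

end

theory Submission
  imports Defs
begin

(* Write m1 = \<nu>1(j,\<tau>) and m2 = \<nu>2(j,\<tau>). The Hamiltonian vector field is q' = a p,
   p' = -(b q^5 + m1 q + m2 q^3), and it conserves the energy H/a. If a m1 > 0 this energy is
   positive definite near the origin, which is therefore Lyapunov stable. If a m1 < 0 the zero level
   of the energy contains a separatrix leaving the origin; inverting an antiderivative gives explicit
   solutions along it that start arbitrarily close to the origin and escape, so the origin is unstable.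

   The nonzero singular points are the points (q, 0) with b q^4 + m2 q^2 + m1 = 0. Near the origin
   there are none when m1 m2 > 0, while for small m1 with m1 m2 < 0 there is one with
   q^2 ~ -m1/m2; the eigenvalues e of its linearisation satisfy e^2 = -2 a q^2 (m2 + 2 b q^2),
   so it is a centre if a m2 > 0 and a saddle if a m2 < 0.

   The conditions on \<nu>1 at the origin make every zero j0 of \<nu>1(-,\<tau>) with small \<tau> \<noteq> 0
   simple: at a double zero the first-order estimates give |j0| = O(|\<tau>|) and the second-order
   ones |\<tau>| = O(j0^2). Hence \<nu>1(-,\<tau>) changes sign at j0 while \<nu>2(-,\<tau>) keeps the sign of
   \<nu>2(j0,\<tau>): the origin changes stability and a centre (a \<nu>2 > 0) or a saddle (a \<nu>2 < 0)
   branches off it. *)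

definition sextic_vf :: "real \<Rightarrow> real \<Rightarrow> real \<Rightarrow> real \<Rightarrow> real \<times> real \<Rightarrow> real \<times> real" where
  "sextic_vf a b m1 m2 z = (a * snd z, - (b * fst z ^ 5 + m1 * fst z + m2 * fst z ^ 3))"

lemma ham_vf_H_fam: "ham_vf (H_fam a b \<nu>1 \<nu>2 j t) = sextic_vf a b (\<nu>1 j t) (\<nu>2 j t)"
proof
  fix z :: "real \<times> real"
  obtain q p where z: "z = (q, p)" by (cases z)
  have "deriv (\<lambda>p. H_fam a b \<nu>1 \<nu>2 j t (q, p)) p = a * p"
    unfolding H_fam_def by (rule DERIV_imp_deriv) (auto intro!: derivative_eq_intros)
  moreover have "deriv (\<lambda>q. H_fam a b \<nu>1 \<nu>2 j t (q, p)) q = b * q ^ 5 + \<nu>1 j t * q + \<nu>2 j t * q ^ 3"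
    unfolding H_fam_def by (rule DERIV_imp_deriv) (auto intro!: derivative_eq_intros)
  ultimately show "ham_vf (H_fam a b \<nu>1 \<nu>2 j t) z = sextic_vf a b (\<nu>1 j t) (\<nu>2 j t) z"
    by (simp add: ham_vf_def sextic_vf_def z)
qed

section \<open>Stability from the energy\<close>

definition sextic_energy :: "real \<Rightarrow> real \<Rightarrow> real \<Rightarrow> real \<Rightarrow> real \<times> real \<Rightarrow> real" where
  "sextic_energy a b m1 m2 z =
     snd z ^ 2 / 2 + (b / 6 * fst z ^ 6 + m1 / 2 * fst z ^ 2 + m2 / 4 * fst z ^ 4) / a"

lemma has_vector_derivative_fst:
  assumes "(y has_vector_derivative v) F"
  shows "((\<lambda>t. fst (y t)) has_real_derivative fst v) F"
  using has_derivative_fst[OF assms[unfolded has_vector_derivative_def]]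
  by (simp add: has_field_derivative_def mult.commute[of _ "fst v"])

lemma has_vector_derivative_snd:
  assumes "(y has_vector_derivative v) F"
  shows "((\<lambda>t. snd (y t)) has_real_derivative snd v) F"
  using has_derivative_snd[OF assms[unfolded has_vector_derivative_def]]
  by (simp add: has_field_derivative_def mult.commute[of _ "snd v"])

lemma sextic_energy_has_derivative_zero:
  assumes "a \<noteq> 0" and "(y has_vector_derivative sextic_vf a b m1 m2 (y t)) (at t within S)"
  shows "((\<lambda>t. sextic_energy a b m1 m2 (y t)) has_real_derivative 0) (at t within S)"
proof -
  have q: "((\<lambda>t. fst (y t)) has_real_derivative a * snd (y t)) (at t within S)"
    using has_vector_derivative_fst[OF assms(2)] by (simp add: sextic_vf_def)
  have p: "((\<lambda>t. snd (y t)) has_real_derivative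
      - (b * fst (y t) ^ 5 + m1 * fst (y t) + m2 * fst (y t) ^ 3)) (at t within S)"
    using has_vector_derivative_snd[OF assms(2)] by (simp add: sextic_vf_def)
  define Q where "Q = fst (y t)"
  define P where "P = snd (y t)"
  have "((\<lambda>t. sextic_energy a b m1 m2 (y t)) has_real_derivative
      P * - (b * Q ^ 5 + m1 * Q + m2 * Q ^ 3) + (b * Q ^ 5 + m1 * Q + m2 * Q ^ 3) * (a * P) / a)
      (at t within S)"
    unfolding sextic_energy_def Q_def P_def using assms(1)
    by (auto intro!: derivative_eq_intros q p simp: field_simps eval_nat_numeral)
  moreover have "P * - (b * Q ^ 5 + m1 * Q + m2 * Q ^ 3) + (b * Q ^ 5 + m1 * Q + m2 * Q ^ 3) * (a * P) / a = 0"
    using assms(1) by (simp add: field_simps)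
  ultimately show ?thesis
    by simp
qed

lemma sextic_energy_conserved:
  assumes "a \<noteq> 0"
    and "\<forall>t\<in>{s..T}. (y has_vector_derivative sextic_vf a b m1 m2 (y t)) (at t within {s..T})"
    and "t \<in> {s..T}" and "t' \<in> {s..T}"
  shows "sextic_energy a b m1 m2 (y t) = sextic_energy a b m1 m2 (y t')"
proof -
  obtain c where "\<forall>x\<in>{s..T}. sextic_energy a b m1 m2 (y x) = c"
    using has_field_derivative_zero_constant[of "{s..T}" "\<lambda>t. sextic_energy a b m1 m2 (y t)"]
      sextic_energy_has_derivative_zero[OF assms(1)] assms(2) by auto
  then show ?thesis
    using assms(3,4) by simp
qed

lemma continuous_on_norm_crosses:
  fixes y :: "real \<Rightarrow> 'a::real_normed_vector"
  assumes "continuous_on {s..T} y" and "0 \<in> {s..T}" and "t1 \<in> {s..T}"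
    and "norm (y 0) \<le> e" and "e \<le> norm (y t1)"
  shows "\<exists>t\<in>{s..T}. norm (y t) = e"
proof -
  have segment: "closed_segment 0 t1 \<subseteq> {s..T}"
    using assms(2,3) by (auto simp: closed_segment_eq_real_ivl)
  then have "continuous_on (closed_segment 0 t1) (\<lambda>t. norm (y t))"
    using assms(1) by (intro continuous_on_norm) (rule continuous_on_subset)
  moreover have "e \<in> closed_segment (norm (y 0)) (norm (y t1))"
    using assms(4,5) by (auto simp: closed_segment_eq_real_ivl)
  ultimately show ?thesis
    using IVT'_closed_segment_real[of e "\<lambda>t. norm (y t)" 0 t1] segment by blast
qed

lemma lyap_stable_if_conserved_positive_definite:
  fixes F :: "real \<times> real \<Rightarrow> real \<times> real" and W :: "real \<times> real \<Rightarrow> real"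
  assumes conserved: "\<And>s T y t. \<forall>t\<in>{s..T}. (y has_vector_derivative F (y t)) (at t within {s..T}) \<Longrightarrow>
        t \<in> {s..T} \<Longrightarrow> 0 \<in> {s..T} \<Longrightarrow> W (y t) = W (y 0)"
    and cont: "isCont W 0" and "W 0 = 0"
    and "\<rho> > 0" and "\<kappa> > 0" and pos: "\<And>x. norm x \<le> \<rho> \<Longrightarrow> \<kappa> * norm x ^ 2 \<le> W x"
  shows "lyap_stable F 0"
  unfolding lyap_stable_def
proof (intro allI impI)
  fix \<epsilon> :: real
  assume "\<epsilon> > 0"
  define e where "e = min \<epsilon> \<rho> / 2"
  have e: "0 < e" "e < \<epsilon>" "e \<le> \<rho>"
    using \<open>\<epsilon> > 0\<close> \<open>\<rho> > 0\<close> by (auto simp: e_def)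
  have "\<kappa> * e ^ 2 > 0"
    using \<open>\<kappa> > 0\<close> e by simp
  then obtain d where "d > 0" and near: "\<forall>x. dist x 0 < d \<longrightarrow> dist (W x) (W 0) < \<kappa> * e ^ 2"
    using cont unfolding continuous_at_eps_delta by blast
  have small: "W x < \<kappa> * e ^ 2" if "norm x < d" for x
    using near[rule_format, of x] that \<open>W 0 = 0\<close> by (simp add: dist_norm abs_less_iff)
  show "\<exists>\<delta>>0. \<forall>s T y. s \<le> 0 \<and> 0 \<le> T \<and>
      (\<forall>t\<in>{s..T}. (y has_vector_derivative F (y t)) (at t within {s..T})) \<and>
      dist (y 0) 0 < \<delta> \<longrightarrow> (\<forall>t\<in>{s..T}. dist (y t) 0 < \<epsilon>)"
  proof (intro exI[of _ "min d e"] conjI allI impI ballI)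
    show "min d e > 0"
      using \<open>d > 0\<close> e by simp
    fix s T t1 :: real and y :: "real \<Rightarrow> real \<times> real"
    assume y: "s \<le> 0 \<and> 0 \<le> T \<and> (\<forall>t\<in>{s..T}. (y has_vector_derivative F (y t)) (at t within {s..T})) \<and>
      dist (y 0) 0 < min d e" and t1: "t1 \<in> {s..T}"
    show "dist (y t1) 0 < \<epsilon>"
    proof (rule ccontr)
      assume "\<not> dist (y t1) 0 < \<epsilon>"
      then have "norm (y 0) \<le> e" and "e \<le> norm (y t1)"
        using y e by auto
      moreover have "continuous_on {s..T} y"
        using y has_vector_derivative_continuous continuous_on_eq_continuous_within by blast
      ultimately obtain t2 where t2: "t2 \<in> {s..T}" "norm (y t2) = e"
        using continuous_on_norm_crosses[of s T y t1 e] y t1 by auto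
      have "\<kappa> * e ^ 2 \<le> W (y t2)"
        using pos[of "y t2"] t2 e by simp
      also have "\<dots> = W (y 0)"
        using conserved[of s T y t2] y t2 by simp
      also have "\<dots> < \<kappa> * e ^ 2"
        using small y by simp
      finally show False
        by simp
    qed
  qed
qed

lemma quartic_small_near_zero:
  fixes A B \<epsilon> :: real
  assumes "\<epsilon> > 0"
  shows "\<exists>R>0. \<forall>q. \<bar>q\<bar> < R \<longrightarrow> \<bar>A * q ^ 2 + B * q ^ 4\<bar> < \<epsilon>"
proof -
  have "isCont (\<lambda>q::real. A * q ^ 2 + B * q ^ 4) 0"
    by (intro continuous_intros)
  then show ?thesis
    using assms by (auto simp: continuous_at_eps_delta dist_real_def)
qed

lemma sextic_energy_positive_definite:
  assumes "a * m1 > 0"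
  shows "\<exists>\<rho>>0. \<exists>\<kappa>>0. \<forall>x. norm x \<le> \<rho> \<longrightarrow> \<kappa> * norm x ^ 2 \<le> sextic_energy a b m1 m2 x"
proof -
  have a: "a \<noteq> 0"
    using assms by auto
  define k where "k = m1 / a"
  have "k = (a * m1) / a ^ 2"
    using a by (simp add: k_def power2_eq_square)
  then have k: "k > 0"
    using assms a by simp
  then have "k / 4 > 0"
    by simp
  from quartic_small_near_zero[OF this, of "m2 / (4 * a)" "b / (6 * a)"]
  obtain R where "R > 0" and R: "\<And>q. \<bar>q\<bar> < R \<Longrightarrow> \<bar>m2 / (4 * a) * q ^ 2 + b / (6 * a) * q ^ 4\<bar> < k / 4"
    by blast
  have "min (1 / 2) (k / 4) * norm x ^ 2 \<le> sextic_energy a b m1 m2 x" if "norm x \<le> R / 2" for x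
  proof -
    obtain q p where x: "x = (q, p)"
      by (cases x)
    have "\<bar>q\<bar> < R"
      using norm_fst_le[of q p] that \<open>R > 0\<close> unfolding x real_norm_def by linarith
    define E where "E = m2 / (4 * a) * q ^ 2 + b / (6 * a) * q ^ 4"
    have "\<bar>E\<bar> < k / 4"
      using R[OF \<open>\<bar>q\<bar> < R\<close>] by (simp only: E_def)
    then have "q ^ 2 * - (k / 4) \<le> q ^ 2 * E"
      by (intro mult_left_mono) (simp_all add: abs_less_iff)
    have "min (1 / 2) (k / 4) * p ^ 2 \<le> 1 / 2 * p ^ 2" "min (1 / 2) (k / 4) * q ^ 2 \<le> k / 4 * q ^ 2"
      by (intro mult_right_mono; simp)+
    then have "min (1 / 2) (k / 4) * norm x ^ 2 \<le> p ^ 2 / 2 + k / 4 * q ^ 2"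
      by (simp add: x norm_Pair algebra_simps)
    also have "\<dots> = p ^ 2 / 2 + k / 2 * q ^ 2 + q ^ 2 * - (k / 4)"
      by (simp add: algebra_simps)
    also have "\<dots> \<le> p ^ 2 / 2 + k / 2 * q ^ 2 + q ^ 2 * E"
      using \<open>q ^ 2 * - (k / 4) \<le> q ^ 2 * E\<close> by (rule add_left_mono)
    also have "\<dots> = sextic_energy a b m1 m2 x"
      using a by (simp add: sextic_energy_def x k_def E_def field_simps)
    finally show ?thesis .
  qed
  then show ?thesis
    using \<open>R > 0\<close> k by (intro exI[of _ "R / 2"] conjI exI[of _ "min (1 / 2) (k / 4)"]) auto
qed

lemma lyap_stable_sextic_vf:
  assumes "a * m1 > 0"
  shows "lyap_stable (sextic_vf a b m1 m2) 0"
proof -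
  have a: "a \<noteq> 0"
    using assms by auto
  obtain \<rho> \<kappa> where "\<rho> > 0" and "\<kappa> > 0"
    and pos: "\<forall>x. norm x \<le> \<rho> \<longrightarrow> \<kappa> * norm x ^ 2 \<le> sextic_energy a b m1 m2 x"
    using sextic_energy_positive_definite[OF assms] by blast
  show ?thesis
  proof (rule lyap_stable_if_conserved_positive_definite[OF _ _ _ \<open>\<rho> > 0\<close> \<open>\<kappa> > 0\<close>])
    show "sextic_energy a b m1 m2 (y t) = sextic_energy a b m1 m2 (y 0)"
      if "\<forall>t\<in>{s..T}. (y has_vector_derivative sextic_vf a b m1 m2 (y t)) (at t within {s..T})"
        and "t \<in> {s..T}" and "0 \<in> {s..T}" for s T y t
      using sextic_energy_conserved[OF a that] .
    show "isCont (sextic_energy a b m1 m2) 0"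
      unfolding sextic_energy_def[abs_def] using a by (intro continuous_intros) simp_all
    show "sextic_energy a b m1 m2 0 = 0"
      by (simp add: sextic_energy_def)
  qed (use pos in blast)
qed

section \<open>Instability along the separatrix\<close>

lemma not_lyap_stable_if_escaping:
  assumes "R > 0"
    and escape: "\<And>\<delta>. \<delta> > 0 \<Longrightarrow> \<exists>T y. 0 \<le> T \<and>
        (\<forall>t\<in>{0..T}. (y has_vector_derivative F (y t)) (at t within {0..T})) \<and>
        norm (y 0) < \<delta> \<and> R \<le> norm (y T)"
  shows "\<not> lyap_stable F 0"
proof
  assume "lyap_stable F 0"
  then obtain \<delta> where "\<delta> > 0" and stable: "\<forall>s T y. s \<le> 0 \<and> 0 \<le> T \<and>
      (\<forall>t\<in>{s..T}. (y has_vector_derivative F (y t)) (at t within {s..T})) \<and>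
      dist (y 0) 0 < \<delta> \<longrightarrow> (\<forall>t\<in>{s..T}. dist (y t) 0 < R)"
    using \<open>R > 0\<close> unfolding lyap_stable_def by blast
  obtain T y where "0 \<le> T" and y: "\<forall>t\<in>{0..T}. (y has_vector_derivative F (y t)) (at t within {0..T})"
    and "norm (y 0) < \<delta>" and "R \<le> norm (y T)"
    using escape[OF \<open>\<delta> > 0\<close>] by blast
  then have "dist (y T) 0 < R"
    using stable[rule_format, of 0 T y T] by simp
  with \<open>R \<le> norm (y T)\<close> show False
    by simp
qed

lemma strict_mono_on_if_deriv_pos:
  fixes G :: "real \<Rightarrow> real"
  assumes "\<And>z. a < z \<Longrightarrow> z < b \<Longrightarrow> (G has_real_derivative G' z) (at z) \<and> G' z > 0"
  shows "strict_mono_on {a<..<b} G"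
proof (rule strict_mono_onI)
  fix x y
  assume xy: "x \<in> {a<..<b}" "y \<in> {a<..<b}" "x < y"
  show "G x < G y"
  proof (rule DERIV_pos_imp_increasing_open[OF \<open>x < y\<close>])
    show "\<exists>d. (G has_real_derivative d) (at z) \<and> 0 < d" if "x < z" "z < y" for z
      using assms[of z] xy that by auto
    have "isCont G z" if "x \<le> z" "z \<le> y" for z
      using assms[of z] xy that DERIV_isCont by auto
    then show "continuous_on {x..y} G"
      by (intro continuous_at_imp_continuous_on) auto
  qed
qed

lemma inv_into_has_real_derivative:
  fixes G :: "real \<Rightarrow> real"
  assumes "a < x" "x < b"
    and deriv: "\<And>z. a < z \<Longrightarrow> z < b \<Longrightarrow> (G has_real_derivative G' z) (at z) \<and> G' z > 0"
  shows "(inv_into {a<..<b} G has_real_derivative inverse (G' x)) (at (G x))"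
proof -
  define Q where "Q = inv_into {a<..<b} G"
  have mono: "strict_mono_on {a<..<b} G"
    using deriv by (rule strict_mono_on_if_deriv_pos)
  have QG: "Q (G z) = z" if "a < z" "z < b" for z
    using that strict_mono_on_imp_inj_on[OF mono] by (simp add: Q_def)
  define c where "c = (a + x) / 2"
  define d where "d = (x + b) / 2"
  have cd: "a < c" "c < x" "x < d" "d < b"
    using assms(1,2) by (auto simp: c_def d_def)
  have contG: "isCont G z" if "c \<le> z" "z \<le> d" for z
    using deriv[of z] that cd DERIV_isCont by auto
  have GQ: "G (Q y) = y" if "G c < y" "y < G d" for y
  proof -
    have "\<exists>z. c \<le> z \<and> z \<le> d \<and> G z = y"
      using that cd contG by (intro IVT) auto
    then obtain z where "c \<le> z" "z \<le> d" "G z = y"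
      by blast
    then show ?thesis
      using QG[of z] cd by simp
  qed
  have "(Q has_real_derivative inverse (G' (Q (G x)))) (at (G x))"
  proof (rule DERIV_inverse_function[where a = "G c" and b = "G d"])
    show "(G has_real_derivative G' (Q (G x))) (at (Q (G x)))" "G' (Q (G x)) \<noteq> 0"
      using deriv[OF assms(1,2)] QG[OF assms(1,2)] by auto
    show "G c < G x" "G x < G d"
      using strict_mono_onD[OF mono] cd by auto
    show "isCont Q (G x)"
      using isCont_inverse_function2[where f = G and g = Q and a = c and b = d] cd contG QG by auto
  qed (use GQ in auto)
  then show ?thesis
    using QG assms(1,2) by (simp add: Q_def)
qed

lemma autonomous_ode_connects:
  fixes f :: "real \<Rightarrow> real"
  assumes "\<alpha> < q0" "q0 < q1" "q1 < \<beta>"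
    and contf: "continuous_on {\<alpha>..\<beta>} f" and fpos: "\<And>x. x \<in> {\<alpha>..\<beta>} \<Longrightarrow> f x > 0"
  shows "\<exists>Q T. 0 < T \<and> Q 0 = q0 \<and> Q T = q1 \<and>
           (\<forall>t\<in>{0..T}. Q t \<in> {q0..q1} \<and> (Q has_real_derivative f (Q t)) (at t))"
proof -
  have "continuous_on {\<alpha>..\<beta>} (\<lambda>x. 1 / f x)"
    using fpos by (intro continuous_intros contf) (metis less_irrefl)
  then obtain G where G: "\<And>x. x \<in> {\<alpha>..\<beta>} \<Longrightarrow> (G has_vector_derivative 1 / f x) (at x within {\<alpha>..\<beta>})"
    using antiderivative_continuous by blast
  have dG: "(G has_real_derivative 1 / f z) (at z) \<and> 1 / f z > 0" if "\<alpha> < z" "z < \<beta>" for z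
    using G[of z] fpos[of z] at_within_Icc_at[OF that] that
    by (simp add: has_real_derivative_iff_has_vector_derivative)
  \<comment> \<open>Q is the inverse of an antiderivative of 1 / f, shifted in time.\<close>
  define Q where "Q = (\<lambda>t. inv_into {\<alpha><..<\<beta>} G (t + G q0))"
  have QG: "Q (G x - G q0) = x" if "x \<in> {q0..q1}" for x
    using that assms(1-3) strict_mono_on_imp_inj_on[OF strict_mono_on_if_deriv_pos[OF dG]]
    by (simp add: Q_def)
  have "G q0 < G q1"
    using strict_mono_onD[OF strict_mono_on_if_deriv_pos[OF dG]] assms(1-3) by simp
  moreover have "Q t \<in> {q0..q1} \<and> (Q has_real_derivative f (Q t)) (at t)" if t: "t \<in> {0..G q1 - G q0}" for t
  proof -
    have "isCont G z" if "z \<in> {q0..q1}" for z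
      using dG[of z] that assms(1-3) DERIV_isCont by auto
    then have "continuous_on {q0..q1} G"
      by (rule continuous_at_imp_continuous_on[OF ballI])
    then obtain x where x: "x \<in> {q0..q1}" "G x = t + G q0"
      using IVT'[of G q0 "t + G q0" q1] t assms(2) by auto
    have "(inv_into {\<alpha><..<\<beta>} G has_real_derivative inverse (1 / f x)) (at (G x))"
      using inv_into_has_real_derivative[of \<alpha> x \<beta> G "\<lambda>z. 1 / f z"] dG x assms(1,3) by auto
    moreover have "((\<lambda>t. t + G q0) has_real_derivative 1) (at t)"
      by (auto intro!: derivative_eq_intros)
    ultimately have "(Q has_real_derivative inverse (1 / f x) * 1) (at t)"
      unfolding Q_def x(2) by (rule DERIV_chain2)
    then have "(Q has_real_derivative f x) (at t)"
      by simp
    moreover have "Q t = x"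
      using QG[OF x(1)] x(2) by simp
    ultimately show ?thesis
      using x(1) by simp
  qed
  ultimately show ?thesis
    using QG[of q0] QG[of q1] assms(2)
    by (intro exI[of _ Q] exI[of _ "G q1 - G q0"]) auto
qed

(* On the zero level of sextic_energy, p^2 = q^2 times the radicand; the factor sgn a makes
   q' = a p positive for q > 0. *)
definition separatrix :: "real \<Rightarrow> real \<Rightarrow> real \<Rightarrow> real \<Rightarrow> real \<Rightarrow> real" where
  "separatrix a b m1 m2 q = sgn a * q * sqrt (- (m1 + m2 / 2 * q ^ 2 + b / 3 * q ^ 4) / a)"

lemma separatrix_lift_solves:
  assumes a: "a \<noteq> 0" and pos: "- (m1 + m2 / 2 * Q t ^ 2 + b / 3 * Q t ^ 4) / a > 0"
    and dQ: "(Q has_real_derivative a * separatrix a b m1 m2 (Q t)) (at t)"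
  shows "((\<lambda>t. (Q t, separatrix a b m1 m2 (Q t))) has_vector_derivative
           sextic_vf a b m1 m2 (Q t, separatrix a b m1 m2 (Q t))) (at t)"
proof -
  define q where "q = Q t"
  define \<psi> where "\<psi> = - (m1 + m2 / 2 * q ^ 2 + b / 3 * q ^ 4) / a"
  define \<phi> where "\<phi> = sqrt \<psi>"
  have "\<psi> > 0"
    using pos by (simp add: \<psi>_def q_def)
  then have \<phi>: "\<phi> > 0" "\<phi> * \<phi> = \<psi>"
    by (auto simp: \<phi>_def)
  have sgn: "sgn a * sgn a = 1"
    using a by (simp add: sgn_if)
  define Q' where "Q' = a * (sgn a * q * \<phi>)"
  have dQ': "(Q has_real_derivative Q') (at t)"
    using dQ by (simp add: Q'_def \<phi>_def \<psi>_def q_def separatrix_def)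
  define A where "A = - m2 / (2 * a)"
  define B where "B = - b / (3 * a)"
  define \<rho> where "\<rho> = (\<lambda>q. - m1 / a + A * q ^ 2 + B * q ^ 4)"
  have sep: "separatrix a b m1 m2 q = sgn a * q * sqrt (\<rho> q)" for q
    unfolding separatrix_def \<rho>_def A_def B_def using a by (simp add: field_simps)
  have "\<rho> (Q t) = \<psi>"
    unfolding \<rho>_def \<psi>_def A_def B_def q_def using a by (simp add: field_simps)
  have "((\<lambda>t. \<rho> (Q t)) has_real_derivative 2 * A * q * Q' + 4 * B * q ^ 3 * Q') (at t)"
    unfolding \<rho>_def q_def by (auto intro!: derivative_eq_intros dQ' simp: algebra_simps)
  from DERIV_chain2[OF DERIV_real_sqrt this] \<open>\<psi> > 0\<close>
  have "((\<lambda>t. sqrt (\<rho> (Q t))) has_real_derivative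
      inverse \<phi> / 2 * (2 * A * q * Q' + 4 * B * q ^ 3 * Q')) (at t)"
    unfolding \<open>\<rho> (Q t) = \<psi>\<close> \<phi>_def by simp
  from DERIV_mult[OF DERIV_cmult[OF dQ', of "sgn a"] this]
  have "((\<lambda>t. separatrix a b m1 m2 (Q t)) has_real_derivative
      sgn a * Q' * \<phi> + inverse \<phi> / 2 * (2 * A * q * Q' + 4 * B * q ^ 3 * Q') * (sgn a * q)) (at t)"
    unfolding sep \<open>\<rho> (Q t) = \<psi>\<close> \<phi>_def q_def .
  moreover have "sgn a * Q' * \<phi> + inverse \<phi> / 2 * (2 * A * q * Q' + 4 * B * q ^ 3 * Q') * (sgn a * q)
      = - (b * q ^ 5 + m1 * q + m2 * q ^ 3)"
  proof -
    have "sgn a * Q' * \<phi> + inverse \<phi> / 2 * (2 * A * q * Q' + 4 * B * q ^ 3 * Q') * (sgn a * q)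
        = a * (sgn a * sgn a) * (q * (\<phi> * \<phi>) + q * q * (A * q + 2 * B * q ^ 3))"
      using \<phi> by (simp add: Q'_def field_simps eval_nat_numeral)
    also have "\<dots> = - (b * q ^ 5 + m1 * q + m2 * q ^ 3)"
      unfolding sgn \<phi>(2) \<psi>_def A_def B_def using a by (simp add: field_simps eval_nat_numeral)
    finally show ?thesis .
  qed
  ultimately show ?thesis
    using dQ by (auto intro!: has_vector_derivative_Pair
        simp: has_real_derivative_iff_has_vector_derivative[symmetric] sextic_vf_def q_def)
qed

lemma separatrix_radicand_pos_near_zero:
  fixes a b m1 m2 :: real
  assumes "a * m1 < 0"
  shows "\<exists>R>0. \<forall>q. \<bar>q\<bar> < R \<longrightarrow> - (m1 + m2 / 2 * q ^ 2 + b / 3 * q ^ 4) / a > 0"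
proof -
  have a: "a \<noteq> 0"
    using assms by auto
  have "0 < - (a * m1) / a ^ 2"
    using assms a by (intro divide_pos_pos) auto
  also have "\<dots> = - m1 / a"
    using a by (simp add: power2_eq_square)
  finally have "- m1 / a > 0" .
  from quartic_small_near_zero[OF this, of "- m2 / (2 * a)" "- b / (3 * a)"]
  obtain R where "R > 0"
    and R: "\<And>q. \<bar>q\<bar> < R \<Longrightarrow> \<bar>- m2 / (2 * a) * q ^ 2 + - b / (3 * a) * q ^ 4\<bar> < - m1 / a"
    by blast
  have "- (m1 + m2 / 2 * q ^ 2 + b / 3 * q ^ 4) / a > 0" if "\<bar>q\<bar> < R" for q
  proof -
    have "- (m1 + m2 / 2 * q ^ 2 + b / 3 * q ^ 4) / a
        = - m1 / a + (- m2 / (2 * a) * q ^ 2 + - b / (3 * a) * q ^ 4)"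
      using a by (simp add: field_simps)
    then show ?thesis
      using R[OF that] unfolding abs_less_iff by linarith
  qed
  then show ?thesis
    using \<open>R > 0\<close> by blast
qed

lemma mult_separatrix_pos:
  assumes "a \<noteq> 0" and "- (m1 + m2 / 2 * q ^ 2 + b / 3 * q ^ 4) / a > 0" and "q > 0"
  shows "a * separatrix a b m1 m2 q > 0"
proof -
  have "a * separatrix a b m1 m2 q = \<bar>a\<bar> * q * sqrt (- (m1 + m2 / 2 * q ^ 2 + b / 3 * q ^ 4) / a)"
    by (simp add: separatrix_def abs_sgn mult.assoc[symmetric] mult.commute[of _ "sgn a"])
  then show ?thesis
    using assms by simp
qed

lemma separatrix_solution_escapes:
  assumes a: "a \<noteq> 0" and "R > 0"
    and pos: "\<And>q. \<bar>q\<bar> < R \<Longrightarrow> - (m1 + m2 / 2 * q ^ 2 + b / 3 * q ^ 4) / a > 0"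
    and "0 < q0" and "q0 < R / 2"
  shows "\<exists>T y. 0 \<le> T \<and>
      (\<forall>t\<in>{0..T}. (y has_vector_derivative sextic_vf a b m1 m2 (y t)) (at t within {0..T})) \<and>
      y 0 = (q0, separatrix a b m1 m2 q0) \<and> R / 2 \<le> norm (y T)"
proof -
  define P where "P = separatrix a b m1 m2"
  have "continuous_on {q0 / 2..3 * R / 4} (\<lambda>x. a * P x)"
    unfolding P_def separatrix_def[abs_def] using a by (intro continuous_intros) simp_all
  moreover have "a * P x > 0" if "x \<in> {q0 / 2..3 * R / 4}" for x
    using mult_separatrix_pos[OF a pos[of x]] that \<open>0 < q0\<close> \<open>R > 0\<close> by (simp add: P_def)
  ultimately obtain Q T where "0 < T" "Q 0 = q0" "Q T = R / 2"
    and Q: "\<forall>t\<in>{0..T}. Q t \<in> {q0..R / 2} \<and> (Q has_real_derivative a * P (Q t)) (at t)"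
    using autonomous_ode_connects[of "q0 / 2" q0 "R / 2" "3 * R / 4" "\<lambda>x. a * P x"] assms(4,5)
    by auto
  define y where "y = (\<lambda>t. (Q t, P (Q t)))"
  have "(y has_vector_derivative sextic_vf a b m1 m2 (y t)) (at t within {0..T})"
    if "t \<in> {0..T}" for t
  proof -
    have "Q t \<in> {q0..R / 2}" and dQ: "(Q has_real_derivative a * P (Q t)) (at t)"
      using Q that by auto
    then have "- (m1 + m2 / 2 * Q t ^ 2 + b / 3 * Q t ^ 4) / a > 0"
      using pos[of "Q t"] \<open>0 < q0\<close> \<open>R > 0\<close> by simp
    with dQ have "(y has_vector_derivative sextic_vf a b m1 m2 (y t)) (at t)"
      unfolding y_def P_def by (intro separatrix_lift_solves[OF a])
    then show ?thesis
      by (rule has_vector_derivative_at_within)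
  qed
  moreover have "R / 2 \<le> norm (y T)"
    unfolding y_def \<open>Q T = R / 2\<close> using norm_fst_le[of "R / 2" "P (R / 2)"] \<open>R > 0\<close> by simp
  ultimately show ?thesis
    using \<open>0 < T\<close> \<open>Q 0 = q0\<close> by (intro exI[of _ T] exI[of _ y]) (auto simp: y_def P_def)
qed

lemma sextic_vf_escaping_solutions:
  assumes "a * m1 < 0"
  shows "\<exists>R>0. \<forall>\<delta>>0. \<exists>T y. 0 \<le> T \<and>
      (\<forall>t\<in>{0..T}. (y has_vector_derivative sextic_vf a b m1 m2 (y t)) (at t within {0..T})) \<and>
      norm (y 0) < \<delta> \<and> R \<le> norm (y T)"
proof -
  have a: "a \<noteq> 0"
    using assms by auto
  obtain R where "R > 0" and pos: "\<forall>q. \<bar>q\<bar> < R \<longrightarrow> - (m1 + m2 / 2 * q ^ 2 + b / 3 * q ^ 4) / a > 0"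
    using separatrix_radicand_pos_near_zero[OF assms] by blast
  show ?thesis
  proof (rule exI[of _ "R / 2"], intro conjI allI impI)
    show "R / 2 > 0"
      using \<open>R > 0\<close> by simp
    fix \<delta> :: real
    assume "\<delta> > 0"
    have "isCont (\<lambda>q. (q, separatrix a b m1 m2 q)) 0"
      unfolding separatrix_def[abs_def] using a by (intro continuous_intros) simp_all
    then obtain d where "d > 0"
      and d: "\<And>q. dist q 0 < d \<Longrightarrow> dist (q, separatrix a b m1 m2 q) (0, separatrix a b m1 m2 0) < \<delta>"
      using \<open>\<delta> > 0\<close> unfolding continuous_at_eps_delta by blast
    define q0 where "q0 = min d R / 4"
    have q0: "0 < q0" "q0 < d" "q0 < R / 2"
      using \<open>d > 0\<close> \<open>R > 0\<close> by (auto simp: q0_def)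
    then have "norm (q0, separatrix a b m1 m2 q0) < \<delta>"
      using d[of q0] by (simp add: dist_norm separatrix_def)
    then show "\<exists>T y. 0 \<le> T \<and>
        (\<forall>t\<in>{0..T}. (y has_vector_derivative sextic_vf a b m1 m2 (y t)) (at t within {0..T})) \<and>
        norm (y 0) < \<delta> \<and> R / 2 \<le> norm (y T)"
      using separatrix_solution_escapes[OF a \<open>R > 0\<close> _ q0(1,3)] pos by fastforce
  qed
qed

lemma not_lyap_stable_sextic_vf:
  assumes "a * m1 < 0"
  shows "\<not> lyap_stable (sextic_vf a b m1 m2) 0"
proof -
  obtain R where "R > 0" and "\<forall>\<delta>>0. \<exists>T y. 0 \<le> T \<and>
      (\<forall>t\<in>{0..T}. (y has_vector_derivative sextic_vf a b m1 m2 (y t)) (at t within {0..T})) \<and>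
      norm (y 0) < \<delta> \<and> R \<le> norm (y T)"
    using sextic_vf_escaping_solutions[OF assms] by blast
  then show ?thesis
    by (intro not_lyap_stable_if_escaping) auto
qed

lemma lyap_stable_sextic_vf_iff:
  assumes "a * m1 \<noteq> 0"
  shows "lyap_stable (sextic_vf a b m1 m2) 0 \<longleftrightarrow> a * m1 > 0"
proof (cases "a * m1 > 0")
  case False
  then have "a * m1 < 0"
    using assms by linarith
  then show ?thesis
    using not_lyap_stable_sextic_vf by auto
qed (use lyap_stable_sextic_vf in auto)

section \<open>Nonzero singular points\<close>

lemma sextic_vf_has_derivative:
  "(sextic_vf a b m1 m2 has_derivative
     (\<lambda>h. (a * snd h, - ((5 * b * fst x ^ 4 + m1 + 3 * m2 * fst x ^ 2) * fst h)))) (at x)"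
  unfolding sextic_vf_def[abs_def]
  by (rule has_derivative_Pair) (auto intro!: derivative_eq_intros simp: algebra_simps)

lemma lin_eigenvalues_antidiagonal:
  assumes L: "(F has_derivative L) (at x)" and "L (1, 0) = (0, - w)" and "L (0, 1) = (a, 0)"
    and "a \<noteq> 0" and "e \<in> lin_eigenvalues F x"
  shows "e * e = complex_of_real (- (a * w))"
proof -
  obtain L' v1 v2 where L': "(F has_derivative L') (at x)" and v: "(v1, v2) \<noteq> (0, 0)"
    and e1: "of_real (fst (L' (1, 0))) * v1 + of_real (fst (L' (0, 1))) * v2 = e * v1"
    and e2: "of_real (snd (L' (1, 0))) * v1 + of_real (snd (L' (0, 1))) * v2 = e * v2"
    using \<open>e \<in> lin_eigenvalues F x\<close> unfolding lin_eigenvalues_def by blast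
  have "L' = L"
    using has_derivative_unique[OF L' L] .
  then have e1: "of_real a * v2 = e * v1" and e2: "- of_real w * v1 = e * v2"
    using e1 e2 assms(2,3) by auto
  have "v1 \<noteq> 0"
    using e1 v \<open>a \<noteq> 0\<close> by auto
  have "e * e * v1 = of_real a * (e * v2)"
    using e1 by (simp add: algebra_simps)
  also have "\<dots> = complex_of_real (- (a * w)) * v1"
    unfolding e2[symmetric] by simp
  finally show ?thesis
    using \<open>v1 \<noteq> 0\<close> by (metis mult_right_cancel)
qed

lemma is_centre_antidiagonal:
  assumes "(F has_derivative L) (at x)" and "L (1, 0) = (0, - w)" and "L (0, 1) = (a, 0)"
    and "a * w > 0"
  shows "is_centre F x"
  unfolding is_centre_def
proof (intro conjI ballI)
  show "F differentiable at x"
    using assms(1) by (rule differentiableI)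
  fix e
  assume "e \<in> lin_eigenvalues F x"
  moreover have "a \<noteq> 0"
    using assms(4) by auto
  ultimately have "e * e = complex_of_real (- (a * w))"
    by (intro lin_eigenvalues_antidiagonal[OF assms(1-3)])
  then have "Re e * Re e - Im e * Im e = - (a * w)" and "Re e * Im e = 0"
    by (auto simp: complex_eq_iff)
  then show "e \<noteq> 0" and "Re e = 0"
    using \<open>a * w > 0\<close> by (auto, smt (verit) zero_le_square)
qed

lemma is_saddle_antidiagonal:
  assumes "(F has_derivative L) (at x)" and "L (1, 0) = (0, - w)" and "L (0, 1) = (a, 0)"
    and "a * w < 0"
  shows "is_saddle F x"
  unfolding is_saddle_def
proof (intro conjI ballI)
  show "F differentiable at x"
    using assms(1) by (rule differentiableI)
  fix e
  assume "e \<in> lin_eigenvalues F x"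
  moreover have "a \<noteq> 0"
    using assms(4) by auto
  ultimately have "e * e = complex_of_real (- (a * w))"
    by (intro lin_eigenvalues_antidiagonal[OF assms(1-3)])
  then have "Re e * Re e - Im e * Im e = - (a * w)"
    by (auto simp: complex_eq_iff)
  then show "Re e \<noteq> 0"
    using \<open>a * w < 0\<close> by (auto, smt (verit) zero_le_square)
qed

lemma quadratic_small_positive_root:
  fixes b m1 m2 :: real
  assumes "m1 * m2 < 0" and "8 * \<bar>b\<bar> * \<bar>m1\<bar> \<le> m2 ^ 2"
  shows "\<exists>X>0. b * X ^ 2 + m2 * X + m1 = 0 \<and> X \<le> 2 * \<bar>m1\<bar> / \<bar>m2\<bar> \<and> 4 * \<bar>b\<bar> * X \<le> \<bar>m2\<bar>"
proof -
  define g where "g = (\<lambda>X. b * X ^ 2 + m2 * X + m1)"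
  define X1 where "X1 = 2 * \<bar>m1\<bar> / \<bar>m2\<bar>"
  have "m2 \<noteq> 0" "m1 \<noteq> 0"
    using assms(1) by auto
  have "X1 > 0"
    using \<open>m1 \<noteq> 0\<close> \<open>m2 \<noteq> 0\<close> by (simp add: X1_def)
  have "m2 * X1 = - 2 * m1"
  proof (cases "m2 > 0")
    case True
    then have "m1 < 0"
      using assms(1) by (simp add: mult_less_0_iff)
    then show ?thesis
      using True by (simp add: X1_def)
  next
    case False
    then have "m2 < 0" "m1 > 0"
      using assms(1) \<open>m2 \<noteq> 0\<close> by (auto simp: mult_less_0_iff)
    then show ?thesis
      by (simp add: X1_def)
  qed
  then have gX1: "g X1 = b * X1 ^ 2 - m1"
    by (simp add: g_def)
  have "\<bar>b * X1 ^ 2\<bar> = 4 * \<bar>b\<bar> * \<bar>m1\<bar> * \<bar>m1\<bar> / m2 ^ 2"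
    by (simp add: X1_def abs_mult power2_eq_square)
  also have "\<dots> \<le> \<bar>m1\<bar> / 2"
  proof -
    have "\<bar>m1\<bar> / 2 * (8 * \<bar>b\<bar> * \<bar>m1\<bar>) \<le> \<bar>m1\<bar> / 2 * m2 ^ 2"
      using assms(2) by (intro mult_left_mono) auto
    then show ?thesis
      using \<open>m2 \<noteq> 0\<close> by (simp add: pos_divide_le_eq algebra_simps)
  qed
  finally have "\<bar>b * X1 ^ 2\<bar> \<le> \<bar>m1\<bar> / 2" .
  then have "0 \<in> closed_segment (g 0) (g X1)"
    unfolding gX1 by (cases "m1 > 0") (auto simp: g_def closed_segment_eq_real_ivl abs_le_iff)
  moreover have "continuous_on (closed_segment 0 X1) g"
    unfolding g_def by (intro continuous_intros)
  ultimately obtain X where X: "X \<in> closed_segment 0 X1" "g X = 0"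
    using IVT'_closed_segment_real by blast
  then have "0 \<le> X" "X \<le> X1"
    using \<open>X1 > 0\<close> by (auto simp: closed_segment_eq_real_ivl)
  moreover have "X \<noteq> 0"
    using X(2) \<open>m1 \<noteq> 0\<close> by (auto simp: g_def)
  moreover have "4 * \<bar>b\<bar> * X \<le> \<bar>m2\<bar>"
  proof -
    have "4 * \<bar>b\<bar> * X \<le> 4 * \<bar>b\<bar> * X1"
      using \<open>X \<le> X1\<close> by (simp add: mult_left_mono)
    also have "\<dots> = (8 * \<bar>b\<bar> * \<bar>m1\<bar>) / \<bar>m2\<bar>"
      by (simp add: X1_def)
    also have "\<dots> \<le> m2 ^ 2 / \<bar>m2\<bar>"
      using assms(2) by (simp add: divide_right_mono)
    also have "\<dots> = \<bar>m2\<bar>"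
      using \<open>m2 \<noteq> 0\<close> by (cases "m2 > 0") (simp_all add: power2_eq_square)
    finally show ?thesis .
  qed
  ultimately show ?thesis
    using X(2) unfolding g_def X1_def by (intro exI[of _ X]) auto
qed

lemma sextic_vf_no_small_singular_points:
  assumes "a \<noteq> 0" and "m1 * m2 > 0" and "x \<noteq> 0" and "norm x < sqrt (\<bar>m2\<bar> / \<bar>b\<bar>)"
  shows "sextic_vf a b m1 m2 x \<noteq> 0"
proof
  assume "sextic_vf a b m1 m2 x = 0"
  obtain q p where x: "x = (q, p)"
    by (cases x)
  have "p = 0" and "q * (b * (q ^ 2) ^ 2 + m2 * q ^ 2 + m1) = 0"
    using \<open>sextic_vf a b m1 m2 x = 0\<close> \<open>a \<noteq> 0\<close>
    by (auto simp: sextic_vf_def x zero_prod_def algebra_simps eval_nat_numeral)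
  then have "q \<noteq> 0" and root: "b * (q ^ 2) ^ 2 = - (m2 * q ^ 2 + m1)"
    using \<open>x \<noteq> 0\<close> x by (auto simp: zero_prod_def)
  define u where "u = q ^ 2"
  have "u > 0"
    using \<open>q \<noteq> 0\<close> by (simp add: u_def)
  then have "m2 * u * m1 > 0"
    using mult_pos_pos[OF \<open>m1 * m2 > 0\<close> \<open>u > 0\<close>] by (simp add: ac_simps)
  then have "\<bar>m2\<bar> * u \<le> \<bar>m2 * u + m1\<bar>"
    using \<open>u > 0\<close> by (auto simp: zero_less_mult_iff abs_if)
  also have "\<dots> = \<bar>b * u ^ 2\<bar>"
    using root by (simp add: u_def)
  also have "\<dots> = \<bar>b\<bar> * u * u"
    by (simp add: abs_mult power2_eq_square)
  finally have "\<bar>m2\<bar> \<le> \<bar>b\<bar> * u"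
    using \<open>u > 0\<close> by simp
  moreover have "m2 \<noteq> 0"
    using \<open>m1 * m2 > 0\<close> by auto
  ultimately have "\<bar>m2\<bar> / \<bar>b\<bar> \<le> u"
    by (cases "b = 0") (auto simp: divide_le_eq mult.commute)
  then have "sqrt (\<bar>m2\<bar> / \<bar>b\<bar>) \<le> sqrt u"
    by (rule real_sqrt_le_mono)
  also have "\<dots> = norm q"
    by (simp add: u_def)
  also have "\<dots> \<le> norm x"
    using norm_fst_le[of q p] by (simp add: x)
  finally show False
    using assms(4) by simp
qed

lemma sextic_vf_type_on_axis:
  assumes "a * (5 * b * q ^ 4 + m1 + 3 * m2 * q ^ 2) \<noteq> 0"
  shows "if a * (5 * b * q ^ 4 + m1 + 3 * m2 * q ^ 2) < 0 then is_saddle (sextic_vf a b m1 m2) (q, 0)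
    else is_centre (sextic_vf a b m1 m2) (q, 0)"
proof -
  define w where "w = 5 * b * q ^ 4 + m1 + 3 * m2 * q ^ 2"
  have L: "(sextic_vf a b m1 m2 has_derivative
      (\<lambda>h. (a * snd h, - ((5 * b * q ^ 4 + m1 + 3 * m2 * q ^ 2) * fst h)))) (at (q, 0))"
    using sextic_vf_has_derivative[of a b m1 m2 "(q, 0)"] by simp
  have L10: "(\<lambda>h. (a * snd h, - ((5 * b * q ^ 4 + m1 + 3 * m2 * q ^ 2) * fst h))) (1, 0) = (0, - w)"
    by (simp add: w_def)
  show ?thesis
  proof (cases "a * w < 0")
    case True
    then show ?thesis
      using is_saddle_antidiagonal[OF L L10] by (simp add: w_def)
  next
    case False
    then have "a * w > 0"
      using assms unfolding w_def[symmetric] by linarith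
    with False show ?thesis
      using is_centre_antidiagonal[OF L L10] by (simp add: w_def)
  qed
qed

lemma sextic_vf_small_singular_point:
  assumes "a \<noteq> 0" and "m1 * m2 < 0" and "8 * \<bar>b\<bar> * \<bar>m1\<bar> \<le> m2 ^ 2"
  shows "\<exists>c. c \<noteq> 0 \<and> sextic_vf a b m1 m2 c = 0 \<and> norm c \<le> sqrt (2 * \<bar>m1\<bar> / \<bar>m2\<bar>) \<and>
    (if a * m2 < 0 then is_saddle (sextic_vf a b m1 m2) c else is_centre (sextic_vf a b m1 m2) c)"
proof -
  obtain X where "X > 0" and root: "b * X ^ 2 + m2 * X + m1 = 0"
    and "X \<le> 2 * \<bar>m1\<bar> / \<bar>m2\<bar>" and "4 * \<bar>b\<bar> * X \<le> \<bar>m2\<bar>"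
    using quadratic_small_positive_root[OF assms(2,3)] by blast
  define q where "q = sqrt X"
  have "q > 0" and q2: "q ^ 2 = X"
    using \<open>X > 0\<close> by (auto simp: q_def)
  have q4: "q ^ 4 = X ^ 2"
    unfolding q2[symmetric] by (simp flip: power_mult)
  have "b * q ^ 5 + m1 * q + m2 * q ^ 3 = q * (b * q ^ 4 + m2 * q ^ 2 + m1)"
    by (simp add: algebra_simps eval_nat_numeral)
  then have sing: "sextic_vf a b m1 m2 (q, 0) = 0"
    using root by (simp add: sextic_vf_def q2 q4 zero_prod_def)
  have "norm (q, 0::real) \<le> sqrt (2 * \<bar>m1\<bar> / \<bar>m2\<bar>)"
    using \<open>q > 0\<close> \<open>X \<le> 2 * \<bar>m1\<bar> / \<bar>m2\<bar>\<close> by (simp add: q_def real_sqrt_le_mono)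
  define w where "w = 5 * b * q ^ 4 + m1 + 3 * m2 * q ^ 2"
  have w: "w = 2 * X * (m2 + 2 * b * X)"
    unfolding w_def q4 q2 using root by (simp add: algebra_simps power2_eq_square)
  have "\<bar>2 * b * X\<bar> \<le> \<bar>m2\<bar> / 2"
    using \<open>X > 0\<close> \<open>4 * \<bar>b\<bar> * X \<le> \<bar>m2\<bar>\<close> by (simp add: abs_mult)
  then have "2 * b * X \<le> \<bar>m2\<bar> / 2" and "- (2 * b * X) \<le> \<bar>m2\<bar> / 2"
    by (auto dest: abs_le_D1 abs_le_D2)
  then have "m2 > 0 \<Longrightarrow> m2 + 2 * b * X > 0" and "m2 < 0 \<Longrightarrow> m2 + 2 * b * X < 0"
    by (auto simp: abs_if)
  moreover have "m2 \<noteq> 0"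
    using assms(2) by auto
  ultimately have "(m2 + 2 * b * X) * m2 > 0"
    by (cases "m2 > 0") (auto simp: zero_less_mult_iff)
  then have sign: "a * w < 0 \<longleftrightarrow> a * m2 < 0" and "a * w \<noteq> 0"
    using \<open>X > 0\<close> \<open>a \<noteq> 0\<close> unfolding w by (auto simp: zero_less_mult_iff mult_less_0_iff)
  from sextic_vf_type_on_axis[OF \<open>a * w \<noteq> 0\<close>[unfolded w_def]]
  have "if a * m2 < 0 then is_saddle (sextic_vf a b m1 m2) (q, 0) else is_centre (sextic_vf a b m1 m2) (q, 0)"
    using sign unfolding w_def by simp
  with sing \<open>q > 0\<close> \<open>norm (q, 0) \<le> _\<close> show ?thesis
    by (intro exI[of _ "(q, 0)"]) (auto simp: zero_prod_def)
qed

section \<open>The flip\<close>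

lemma near_nonzero_same_sign:
  fixes x N :: real
  assumes "\<bar>x - N\<bar> < \<bar>N\<bar> / 2"
  shows "x * N > 0" and "\<bar>N\<bar> / 2 \<le> \<bar>x\<bar>"
  using assms by (cases "N > 0"; auto simp: abs_if zero_less_mult_iff split: if_splits)+

lemma sextic_vf_before_flip:
  assumes "a \<noteq> 0" and "m1 * N > 0" and "\<bar>m2 - N\<bar> < \<bar>N\<bar> / 2"
  shows "lyap_stable (sextic_vf a b m1 m2) 0 \<longleftrightarrow> \<not> a * N < 0"
    and "x \<noteq> 0 \<Longrightarrow> norm x < sqrt (\<bar>N\<bar> / (2 * \<bar>b\<bar>)) \<Longrightarrow> sextic_vf a b m1 m2 x \<noteq> 0"
proof -
  have "m2 * N > 0" and "\<bar>N\<bar> / 2 \<le> \<bar>m2\<bar>"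
    using near_nonzero_same_sign[OF assms(3)] by auto
  have "a * m1 \<noteq> 0" and "a * m1 > 0 \<longleftrightarrow> \<not> a * N < 0"
    using assms(1,2) by (auto simp: zero_less_mult_iff mult_less_0_iff)
  then show "lyap_stable (sextic_vf a b m1 m2) 0 \<longleftrightarrow> \<not> a * N < 0"
    using lyap_stable_sextic_vf_iff by blast
  assume "x \<noteq> 0" and "norm x < sqrt (\<bar>N\<bar> / (2 * \<bar>b\<bar>))"
  moreover have "sqrt (\<bar>N\<bar> / (2 * \<bar>b\<bar>)) \<le> sqrt (\<bar>m2\<bar> / \<bar>b\<bar>)"
    using \<open>\<bar>N\<bar> / 2 \<le> \<bar>m2\<bar>\<close> by (simp add: divide_right_mono flip: divide_divide_eq_left)
  moreover have "m1 * m2 > 0"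
    using assms(2) \<open>m2 * N > 0\<close> by (auto simp: zero_less_mult_iff)
  ultimately show "sextic_vf a b m1 m2 x \<noteq> 0"
    using sextic_vf_no_small_singular_points[OF assms(1), of m1 m2 x b] by linarith
qed

lemma sextic_vf_after_flip:
  assumes "a \<noteq> 0" and "m1 * N < 0" and "\<bar>m2 - N\<bar> < \<bar>N\<bar> / 2" and "32 * \<bar>b\<bar> * \<bar>m1\<bar> \<le> N ^ 2"
  shows "lyap_stable (sextic_vf a b m1 m2) 0 \<longleftrightarrow> a * N < 0"
    and "\<exists>c. c \<noteq> 0 \<and> sextic_vf a b m1 m2 c = 0 \<and> norm c \<le> sqrt (4 * \<bar>m1\<bar> / \<bar>N\<bar>) \<and>
      (if a * N < 0 then is_saddle (sextic_vf a b m1 m2) c else is_centre (sextic_vf a b m1 m2) c)"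
proof -
  have "m2 * N > 0" and "\<bar>N\<bar> / 2 \<le> \<bar>m2\<bar>"
    using near_nonzero_same_sign[OF assms(3)] by auto
  have "a * m1 \<noteq> 0" and "a * m1 > 0 \<longleftrightarrow> a * N < 0"
    using assms(1,2) by (auto simp: zero_less_mult_iff mult_less_0_iff)
  then show "lyap_stable (sextic_vf a b m1 m2) 0 \<longleftrightarrow> a * N < 0"
    using lyap_stable_sextic_vf_iff by blast
  have "m1 * m2 < 0"
    using assms(2) \<open>m2 * N > 0\<close> by (auto simp: zero_less_mult_iff mult_less_0_iff)
  moreover have "8 * \<bar>b\<bar> * \<bar>m1\<bar> \<le> m2 ^ 2"
  proof -
    have "(\<bar>N\<bar> / 2) ^ 2 \<le> \<bar>m2\<bar> ^ 2"
      using \<open>\<bar>N\<bar> / 2 \<le> \<bar>m2\<bar>\<close> by (intro power_mono) auto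
    then show ?thesis
      using assms(4) by (simp add: power_divide)
  qed
  ultimately obtain c where c: "c \<noteq> 0" "sextic_vf a b m1 m2 c = 0" "norm c \<le> sqrt (2 * \<bar>m1\<bar> / \<bar>m2\<bar>)"
    and type: "if a * m2 < 0 then is_saddle (sextic_vf a b m1 m2) c else is_centre (sextic_vf a b m1 m2) c"
    using sextic_vf_small_singular_point[OF assms(1)] by blast
  have "2 * \<bar>m1\<bar> / \<bar>m2\<bar> \<le> 2 * \<bar>m1\<bar> / (\<bar>N\<bar> / 2)"
    using \<open>\<bar>N\<bar> / 2 \<le> \<bar>m2\<bar>\<close> \<open>m2 * N > 0\<close> by (intro divide_left_mono) (auto simp flip: abs_mult)
  also have "\<dots> = 4 * \<bar>m1\<bar> / \<bar>N\<bar>"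
    by simp
  finally have "norm c \<le> sqrt (4 * \<bar>m1\<bar> / \<bar>N\<bar>)"
    using c(3) real_sqrt_le_mono by (meson order_trans)
  moreover have "a * m2 < 0 \<longleftrightarrow> a * N < 0"
    using \<open>m2 * N > 0\<close> by (auto simp: zero_less_mult_iff mult_less_0_iff)
  ultimately show "\<exists>c. c \<noteq> 0 \<and> sextic_vf a b m1 m2 c = 0 \<and> norm c \<le> sqrt (4 * \<bar>m1\<bar> / \<bar>N\<bar>) \<and>
      (if a * N < 0 then is_saddle (sextic_vf a b m1 m2) c else is_centre (sextic_vf a b m1 m2) c)"
    using c type by (intro exI[of _ c]) auto
qed

lemma tendsto_zero_at_side_if_dominated:
  fixes c :: "real \<Rightarrow> 'a::real_normed_vector" and g :: "real \<Rightarrow> real"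
  assumes "isCont g j0" and "g j0 = 0" and "e > 0" and "\<sigma> \<in> {-1, 1}"
    and bound: "\<And>j. 0 < \<sigma> * (j - j0) \<Longrightarrow> \<sigma> * (j - j0) < e \<Longrightarrow> norm (c j) \<le> sqrt \<bar>g j\<bar>"
  shows "(c \<longlongrightarrow> 0) (at j0 within {j. 0 < \<sigma> * (j - j0)})"
proof (rule Lim_null_comparison)
  show "\<forall>\<^sub>F j in at j0 within {j. 0 < \<sigma> * (j - j0)}. norm (c j) \<le> sqrt \<bar>g j\<bar>"
    unfolding eventually_at
  proof (intro exI[of _ e] conjI ballI impI)
    fix j
    assume "j \<in> {j. 0 < \<sigma> * (j - j0)}" and "j \<noteq> j0 \<and> dist j j0 < e"
    moreover have "\<bar>\<sigma> * (j - j0)\<bar> = \<bar>j - j0\<bar>"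
      using assms(4) by (auto simp: abs_mult)
    ultimately show "norm (c j) \<le> sqrt \<bar>g j\<bar>"
      using bound by (auto simp: dist_real_def)
  qed (rule \<open>e > 0\<close>)
  have "((\<lambda>j. sqrt \<bar>g j\<bar>) \<longlongrightarrow> sqrt \<bar>g j0\<bar>) (at j0)"
    using assms(1) by (intro tendsto_intros) (simp add: isCont_def)
  then show "((\<lambda>j. sqrt \<bar>g j\<bar>) \<longlongrightarrow> 0) (at j0 within {j. 0 < \<sigma> * (j - j0)})"
    using assms(2) by (simp add: Lim_at_imp_Lim_at_within)
qed

lemma coefficient_bounds_near:
  fixes n1 n2 :: "real \<Rightarrow> real"
  assumes "b \<noteq> 0" and "n2 j0 \<noteq> 0" and "isCont n1 j0" and "n1 j0 = 0" and "isCont n2 j0"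
  shows "\<exists>d>0. \<forall>j. \<bar>j - j0\<bar> < d \<longrightarrow>
    \<bar>n2 j - n2 j0\<bar> < \<bar>n2 j0\<bar> / 2 \<and> 32 * \<bar>b\<bar> * \<bar>n1 j\<bar> \<le> n2 j0 ^ 2"
proof -
  have "\<bar>n2 j0\<bar> / 2 > 0" and "n2 j0 ^ 2 / (32 * \<bar>b\<bar>) > 0"
    using assms(1,2) by auto
  then obtain d1 d2 where "d1 > 0" and d1: "\<And>j. dist j j0 < d1 \<Longrightarrow> dist (n2 j) (n2 j0) < \<bar>n2 j0\<bar> / 2"
    and "d2 > 0" and d2: "\<And>j. dist j j0 < d2 \<Longrightarrow> dist (n1 j) (n1 j0) < n2 j0 ^ 2 / (32 * \<bar>b\<bar>)"
    using assms(3,5) unfolding continuous_at_eps_delta by metis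
  have "\<bar>n2 j - n2 j0\<bar> < \<bar>n2 j0\<bar> / 2 \<and> 32 * \<bar>b\<bar> * \<bar>n1 j\<bar> \<le> n2 j0 ^ 2"
    if "\<bar>j - j0\<bar> < min d1 d2" for j
    using d1[of j] d2[of j] that assms(1,4) by (simp add: dist_real_def pos_less_divide_eq mult.commute)
  then show ?thesis
    using \<open>d1 > 0\<close> \<open>d2 > 0\<close> by (intro exI[of _ "min d1 d2"]) auto
qed

lemma flip_bif_sextic_vf:
  fixes n1 n2 :: "real \<Rightarrow> real"
  assumes a: "a \<noteq> 0" and "b \<noteq> 0" and "n2 j0 \<noteq> 0"
    and "isCont n1 j0" and "n1 j0 = 0" and "isCont n2 j0"
    and "\<epsilon> > 0" and \<sigma>: "\<sigma> \<in> {-1, 1}"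
    and before: "\<And>j. 0 < \<sigma> * (j0 - j) \<Longrightarrow> \<sigma> * (j0 - j) < \<epsilon> \<Longrightarrow> n1 j * n2 j0 > 0"
    and after: "\<And>j. 0 < \<sigma> * (j - j0) \<Longrightarrow> \<sigma> * (j - j0) < \<epsilon> \<Longrightarrow> n1 j * n2 j0 < 0"
  shows "flip_bif (a * n2 j0 < 0) (\<lambda>j. sextic_vf a b (n1 j) (n2 j)) j0"
proof -
  define N where "N = n2 j0"
  obtain d where "d > 0" and d: "\<And>j. \<bar>j - j0\<bar> < d \<Longrightarrow> \<bar>n2 j - N\<bar> < \<bar>N\<bar> / 2 \<and> 32 * \<bar>b\<bar> * \<bar>n1 j\<bar> \<le> N ^ 2"
    using coefficient_bounds_near[OF assms(2-6)] unfolding N_def by blast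
  define e where "e = min \<epsilon> d"
  have near: "\<bar>n2 j - N\<bar> < \<bar>N\<bar> / 2 \<and> 32 * \<bar>b\<bar> * \<bar>n1 j\<bar> \<le> N ^ 2" if "\<bar>\<sigma> * (j - j0)\<bar> < e" for j
    using d[of j] that \<sigma> by (auto simp: e_def abs_mult)
  have stable_before: "lyap_stable (sextic_vf a b (n1 j) (n2 j)) 0 \<longleftrightarrow> \<not> a * N < 0"
    and regular_before: "x \<noteq> 0 \<Longrightarrow> norm x < sqrt (\<bar>N\<bar> / (2 * \<bar>b\<bar>)) \<Longrightarrow> sextic_vf a b (n1 j) (n2 j) x \<noteq> 0"
    if "0 < \<sigma> * (j0 - j)" and "\<sigma> * (j0 - j) < e" for j x
    using sextic_vf_before_flip[OF a] before[OF that(1)] near[of j] that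
    by (auto simp: e_def N_def abs_minus_commute right_diff_distrib)
  have stable_after: "lyap_stable (sextic_vf a b (n1 j) (n2 j)) 0 \<longleftrightarrow> a * N < 0"
    and singular_after: "\<exists>c. c \<noteq> 0 \<and> sextic_vf a b (n1 j) (n2 j) c = 0 \<and> norm c \<le> sqrt (4 * \<bar>n1 j\<bar> / \<bar>N\<bar>) \<and>
      (if a * N < 0 then is_saddle (sextic_vf a b (n1 j) (n2 j)) c else is_centre (sextic_vf a b (n1 j) (n2 j)) c)"
    if "0 < \<sigma> * (j - j0)" and "\<sigma> * (j - j0) < e" for j
    using sextic_vf_after_flip[OF a] after[OF that(1)] near[of j] that
    by (auto simp: e_def N_def)
  have "\<forall>j. \<exists>c. 0 < \<sigma> * (j - j0) \<and> \<sigma> * (j - j0) < e \<longrightarrow>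
      c \<noteq> 0 \<and> sextic_vf a b (n1 j) (n2 j) c = 0 \<and> norm c \<le> sqrt (4 * \<bar>n1 j\<bar> / \<bar>N\<bar>) \<and>
      (if a * N < 0 then is_saddle (sextic_vf a b (n1 j) (n2 j)) c else is_centre (sextic_vf a b (n1 j) (n2 j)) c)"
    using singular_after by blast
  then obtain c where c: "\<forall>j. 0 < \<sigma> * (j - j0) \<and> \<sigma> * (j - j0) < e \<longrightarrow>
      c j \<noteq> 0 \<and> sextic_vf a b (n1 j) (n2 j) (c j) = 0 \<and> norm (c j) \<le> sqrt (4 * \<bar>n1 j\<bar> / \<bar>N\<bar>) \<and>
      (if a * N < 0 then is_saddle (sextic_vf a b (n1 j) (n2 j)) (c j)
       else is_centre (sextic_vf a b (n1 j) (n2 j)) (c j))"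
    by (metis choice)
  have "e > 0"
    using \<open>\<epsilon> > 0\<close> \<open>d > 0\<close> by (simp add: e_def)
  have "isCont (\<lambda>j. 4 * n1 j / N) j0"
    using \<open>isCont n1 j0\<close> assms(3) by (intro continuous_intros) (simp_all add: N_def)
  then have "(c \<longlongrightarrow> 0) (at j0 within {j. 0 < \<sigma> * (j - j0)})"
    by (rule tendsto_zero_at_side_if_dominated) (use c \<open>n1 j0 = 0\<close> \<open>e > 0\<close> \<sigma> in \<open>auto simp: abs_mult\<close>)
  moreover have "sqrt (\<bar>N\<bar> / (2 * \<bar>b\<bar>)) > 0"
    using assms(2,3) by (simp add: N_def)
  ultimately show ?thesis
    unfolding flip_bif_def
    using \<open>e > 0\<close> \<sigma> stable_before regular_before stable_after c
    by (intro conjI allI, simp add: sextic_vf_def zero_prod_def)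
       (rule exI[of _ e], auto simp: N_def intro!: exI[of _ "sqrt (\<bar>N\<bar> / (2 * \<bar>b\<bar>))"] bexI[of _ \<sigma>] exI[of _ c])
qed

section \<open>Simple zeros of \<open>\<nu>1\<close>\<close>

lemma abs_diff_le_of_deriv_bound:
  fixes g :: "real \<Rightarrow> real"
  assumes "convex S" and "x \<in> S" and "y \<in> S"
    and "\<And>z. z \<in> S \<Longrightarrow> (g has_real_derivative g' z) (at z)" and "\<And>z. z \<in> S \<Longrightarrow> \<bar>g' z\<bar> \<le> M"
  shows "\<bar>g y - g x\<bar> \<le> M * \<bar>y - x\<bar>"
  using field_differentiable_bound[of S g g' M y x] assms by (simp add: has_field_derivative_at_within)

lemma abs_diff_ge_of_deriv_bound:
  fixes g :: "real \<Rightarrow> real"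
  assumes "convex S" and "x \<in> S" and "y \<in> S"
    and deriv: "\<And>z. z \<in> S \<Longrightarrow> (g has_real_derivative g' z) (at z)" and bound: "\<And>z. z \<in> S \<Longrightarrow> c \<le> \<bar>g' z\<bar>"
  shows "c * \<bar>y - x\<bar> \<le> \<bar>g y - g x\<bar>"
proof -
  have "c * \<bar>v - u\<bar> \<le> \<bar>g v - g u\<bar>" if "u \<in> S" "v \<in> S" "u < v" for u v
  proof -
    have "closed_segment u v \<subseteq> S"
      using assms(1) that(1,2) by (simp add: convex_contains_segment)
    then have "{u..v} \<subseteq> S"
      using \<open>u < v\<close> by (simp add: closed_segment_eq_real_ivl)
    then obtain z where "u < z" "z < v" and z: "g v - g u = (v - u) * g' z"
      using MVT2[OF \<open>u < v\<close>, of g g'] deriv by force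
    then have "z \<in> S"
      using \<open>{u..v} \<subseteq> S\<close> by auto
    then show ?thesis
      using bound[of z] \<open>u < v\<close> by (simp add: z abs_mult mult.commute mult_right_mono)
  qed
  note ordered = this
  show ?thesis
  proof (cases x y rule: linorder_cases)
    case greater
    then have "c * \<bar>x - y\<bar> \<le> \<bar>g x - g y\<bar>"
      using ordered[of y x] assms(2,3) by simp
    then show ?thesis
      by (simp add: abs_minus_commute)
  qed (use ordered assms(2,3) in simp_all)
qed

lemma abs_diff_le_of_critical_point:
  fixes g g' g'' :: "real \<Rightarrow> real"
  assumes "convex S" and "x0 \<in> S" and "x \<in> S"
    and g': "\<And>z. z \<in> S \<Longrightarrow> (g has_real_derivative g' z) (at z)"
    and g'': "\<And>z. z \<in> S \<Longrightarrow> (g' has_real_derivative g'' z) (at z)"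
    and bound: "\<And>z. z \<in> S \<Longrightarrow> \<bar>g'' z\<bar> \<le> M" and "g' x0 = 0"
  shows "\<bar>g x - g x0\<bar> \<le> M * \<bar>x - x0\<bar> ^ 2"
proof -
  have segment: "closed_segment x0 x \<subseteq> S"
    using assms(1-3) by (simp add: convex_contains_segment)
  have "M \<ge> 0"
    using bound[OF assms(2)] by linarith
  have "\<bar>g' z\<bar> \<le> M * \<bar>x - x0\<bar>" if "z \<in> closed_segment x0 x" for z
  proof -
    have "z \<in> S" and "\<bar>z - x0\<bar> \<le> \<bar>x - x0\<bar>"
      using that segment by (auto simp: closed_segment_eq_real_ivl split: if_splits)
    then have "\<bar>g' z - g' x0\<bar> \<le> M * \<bar>z - x0\<bar>"
      using abs_diff_le_of_deriv_bound[OF assms(1,2), of z g' g'' M] g'' bound by simp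
    also have "\<dots> \<le> M * \<bar>x - x0\<bar>"
      using \<open>\<bar>z - x0\<bar> \<le> \<bar>x - x0\<bar>\<close> \<open>M \<ge> 0\<close> by (rule mult_left_mono)
    finally show ?thesis
      using \<open>g' x0 = 0\<close> by simp
  qed
  then have "\<bar>g x - g x0\<bar> \<le> M * \<bar>x - x0\<bar> * \<bar>x - x0\<bar>"
    using abs_diff_le_of_deriv_bound[of "closed_segment x0 x" x0 x g g' "M * \<bar>x - x0\<bar>"] g' segment
    by auto
  then show ?thesis
    by (simp add: power2_eq_square mult.assoc)
qed

(* At a double zero (j0, \<tau>) the first-order estimates give c |j0| \<le> M |\<tau>| and the second-order
   ones d |\<tau>| \<le> M j0^2; together they bound |\<tau>| from below. *)
lemma double_root_parameter_bound:
  fixes g gj gt gjj gjt :: "real \<Rightarrow> real \<Rightarrow> real"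
  assumes dj: "\<And>j t. ((\<lambda>s. g s t) has_real_derivative gj j t) (at j)"
    and dt: "\<And>j t. ((\<lambda>s. g j s) has_real_derivative gt j t) (at t)"
    and djj: "\<And>j t. ((\<lambda>s. gj s t) has_real_derivative gjj j t) (at j)"
    and djt: "\<And>j t. ((\<lambda>s. gj j s) has_real_derivative gjt j t) (at t)"
    and bounds: "\<And>j t. \<bar>j\<bar> < e \<Longrightarrow> \<bar>t\<bar> < e \<Longrightarrow>
        c \<le> \<bar>gjj j t\<bar> \<and> \<bar>gjj j t\<bar> \<le> M \<and> \<bar>gjt j t\<bar> \<le> M \<and> d \<le> \<bar>gt j t\<bar>"
    and "c \<ge> 0" and "g 0 0 = 0" and "gj 0 0 = 0"
    and "\<bar>j0\<bar> < e" and "\<bar>\<tau>\<bar> < e" and "\<tau> \<noteq> 0" and "g j0 \<tau> = 0" and "gj j0 \<tau> = 0"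
  shows "d * c ^ 2 \<le> M ^ 3 * \<bar>\<tau>\<bar>"
proof -
  define S where "S = {-e<..<e}"
  have S: "convex S" "0 \<in> S" "j0 \<in> S" "\<tau> \<in> S"
    using assms(9,10) by (auto simp: S_def)
  have box: "c \<le> \<bar>gjj j t\<bar> \<and> \<bar>gjj j t\<bar> \<le> M \<and> \<bar>gjt j t\<bar> \<le> M \<and> d \<le> \<bar>gt j t\<bar>"
    if "j \<in> S" and "t \<in> S" for j t
    using bounds that by (simp add: S_def abs_less_iff)
  have "M \<ge> 0"
    using box[OF S(2,2)] by linarith
  have gj_\<tau>: "\<bar>gj 0 \<tau>\<bar> \<le> M * \<bar>\<tau>\<bar>"
    using abs_diff_le_of_deriv_bound[OF S(1,2,4), of "gj 0" "gjt 0" M] djt box[OF S(2)]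
    by (simp add: \<open>gj 0 0 = 0\<close>)
  have "c * \<bar>j0\<bar> \<le> \<bar>gj 0 \<tau>\<bar>"
    using abs_diff_ge_of_deriv_bound[OF S(1,3,2), of "\<lambda>s. gj s \<tau>" "\<lambda>s. gjj s \<tau>" c] djj box[OF _ S(4)]
    by (simp add: \<open>gj j0 \<tau> = 0\<close>)
  then have j0_\<tau>: "c * \<bar>j0\<bar> \<le> M * \<bar>\<tau>\<bar>"
    using gj_\<tau> by linarith
  have "\<bar>g 0 \<tau> - g j0 \<tau>\<bar> \<le> M * \<bar>0 - j0\<bar> ^ 2"
    using abs_diff_le_of_critical_point[OF S(1,3,2), of "\<lambda>s. g s \<tau>" "\<lambda>s. gj s \<tau>" "\<lambda>s. gjj s \<tau>" M]
      dj djj box[OF _ S(4)] \<open>gj j0 \<tau> = 0\<close>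
    by simp
  then have g_j0: "\<bar>g 0 \<tau>\<bar> \<le> M * \<bar>j0\<bar> * \<bar>j0\<bar>"
    using \<open>g j0 \<tau> = 0\<close> by (simp add: power2_eq_square mult.assoc)
  have "d * \<bar>\<tau>\<bar> \<le> \<bar>g 0 \<tau>\<bar>"
    using abs_diff_ge_of_deriv_bound[OF S(1,2,4), of "g 0" "gt 0" d] dt box[OF S(2)]
    by (simp add: \<open>g 0 0 = 0\<close>)
  then have "d * \<bar>\<tau>\<bar> \<le> M * \<bar>j0\<bar> * \<bar>j0\<bar>"
    using g_j0 by linarith
  then have "c ^ 2 * (d * \<bar>\<tau>\<bar>) \<le> c ^ 2 * (M * \<bar>j0\<bar> * \<bar>j0\<bar>)"
    by (rule mult_left_mono) simp
  also have "\<dots> = M * (c * \<bar>j0\<bar>) ^ 2"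
    by (simp add: power2_eq_square ac_simps)
  also have "\<dots> \<le> M * (M * \<bar>\<tau>\<bar>) ^ 2"
    using j0_\<tau> \<open>c \<ge> 0\<close> \<open>M \<ge> 0\<close> by (intro mult_left_mono power_mono) auto
  finally have "\<bar>\<tau>\<bar> * (d * c ^ 2) \<le> \<bar>\<tau>\<bar> * (M ^ 3 * \<bar>\<tau>\<bar>)"
    by (simp add: power2_eq_square power3_eq_cube ac_simps)
  then show ?thesis
    using \<open>\<tau> \<noteq> 0\<close> by simp
qed

lemma smooth2_second_partials:
  assumes "smooth2 f"
  obtains fj ft fjj fjt where
    "\<And>j t. ((\<lambda>s. f s t) has_real_derivative fj j t) (at j)"
    "\<And>j t. ((\<lambda>s. f j s) has_real_derivative ft j t) (at t)"
    "\<And>j t. ((\<lambda>s. fj s t) has_real_derivative fjj j t) (at j)"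
    "\<And>j t. ((\<lambda>s. fj j s) has_real_derivative fjt j t) (at t)"
    "continuous_on UNIV (\<lambda>z. ft (fst z) (snd z))"
    "continuous_on UNIV (\<lambda>z. fjj (fst z) (snd z))"
    "continuous_on UNIV (\<lambda>z. fjt (fst z) (snd z))"
proof -
  have "Ck2 2 f"
    using assms unfolding smooth2_def by blast
  then obtain fj ft where fj: "\<And>j t. ((\<lambda>s. f s t) has_real_derivative fj j t) (at j)"
    and ft: "\<And>j t. ((\<lambda>s. f j s) has_real_derivative ft j t) (at t)"
    and "Ck2 1 fj" and "Ck2 1 ft"
    by (auto simp: numeral_2_eq_2)
  obtain fjj fjt where fjj: "\<And>j t. ((\<lambda>s. fj s t) has_real_derivative fjj j t) (at j)"
    and fjt: "\<And>j t. ((\<lambda>s. fj j s) has_real_derivative fjt j t) (at t)"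
    and "Ck2 0 fjj" and "Ck2 0 fjt"
    using \<open>Ck2 1 fj\<close> by auto
  moreover have "continuous_on UNIV (\<lambda>z. ft (fst z) (snd z))"
    using \<open>Ck2 1 ft\<close> by simp
  ultimately show ?thesis
    using that[OF fj ft fjj fjt] by simp
qed

lemma smooth2_isCont_first:
  assumes "smooth2 f"
  shows "isCont (\<lambda>j. f j t) j0"
proof -
  have "continuous_on UNIV (\<lambda>z. f (fst z) (snd z))"
    using assms unfolding smooth2_def by (metis Ck2.simps(1))
  then have "isCont (\<lambda>z. f (fst z) (snd z)) (j0, t)"
    by (simp add: continuous_on_eq_continuous_at)
  then show ?thesis
    using isCont_o2[where f = "\<lambda>j. (j, t)" and a = j0 and g = "\<lambda>z. f (fst z) (snd z)"] by simp
qed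

lemma continuous_on_UNIV_near_origin:
  fixes g :: "real \<Rightarrow> real \<Rightarrow> real"
  assumes "continuous_on UNIV (\<lambda>z. g (fst z) (snd z))" and "\<epsilon> > 0"
  shows "\<exists>e>0. \<forall>j t. \<bar>j\<bar> < e \<longrightarrow> \<bar>t\<bar> < e \<longrightarrow> \<bar>g j t - g 0 0\<bar> < \<epsilon>"
proof -
  have "isCont (\<lambda>z. g (fst z) (snd z)) (0, 0)"
    using assms(1) by (simp add: continuous_on_eq_continuous_at)
  then obtain d where "d > 0" and d: "\<And>z. dist z (0, 0) < d \<Longrightarrow> dist (g (fst z) (snd z)) (g 0 0) < \<epsilon>"
    using assms(2) unfolding continuous_at_eps_delta by force
  have "\<bar>g j t - g 0 0\<bar> < \<epsilon>" if "\<bar>j\<bar> < d / 2" and "\<bar>t\<bar> < d / 2" for j t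
  proof -
    have "dist (j, t) (0, 0) \<le> \<bar>j\<bar> + \<bar>t\<bar>"
      using norm_Pair_le[of j t] by (simp add: dist_norm)
    then show ?thesis
      using d[of "(j, t)"] that by (simp add: dist_real_def)
  qed
  then show ?thesis
    using \<open>d > 0\<close> by (intro exI[of _ "d / 2"]) auto
qed

lemma simple_zeros_near_fold:
  fixes \<nu> :: "real \<Rightarrow> real \<Rightarrow> real"
  assumes "smooth2 \<nu>" and "\<nu> 0 0 = 0" and "deriv (\<lambda>j. \<nu> j 0) 0 = 0"
    and "deriv (deriv (\<lambda>j. \<nu> j 0)) 0 \<noteq> 0" and "deriv (\<lambda>t. \<nu> 0 t) 0 \<noteq> 0"
  shows "\<exists>\<delta>>0. \<forall>\<tau> j0. 0 < \<bar>\<tau>\<bar> \<and> \<bar>\<tau>\<bar> < \<delta> \<and> \<bar>j0\<bar> < \<delta> \<and> \<nu> j0 \<tau> = 0 \<longrightarrow>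
           (\<exists>D. D \<noteq> 0 \<and> ((\<lambda>j. \<nu> j \<tau>) has_real_derivative D) (at j0))"
proof -
  obtain fj ft fjj fjt where dj: "\<And>j t. ((\<lambda>s. \<nu> s t) has_real_derivative fj j t) (at j)"
    and dt: "\<And>j t. ((\<lambda>s. \<nu> j s) has_real_derivative ft j t) (at t)"
    and djj: "\<And>j t. ((\<lambda>s. fj s t) has_real_derivative fjj j t) (at j)"
    and djt: "\<And>j t. ((\<lambda>s. fj j s) has_real_derivative fjt j t) (at t)"
    and "continuous_on UNIV (\<lambda>z. ft (fst z) (snd z))"
    and "continuous_on UNIV (\<lambda>z. fjj (fst z) (snd z))"
    and "continuous_on UNIV (\<lambda>z. fjt (fst z) (snd z))"
    using smooth2_second_partials[OF assms(1)] by blast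
  have "deriv (\<lambda>j. \<nu> j 0) = (\<lambda>j. fj j 0)"
    using dj by (intro ext DERIV_imp_deriv)
  then have "fj 0 0 = 0" and "fjj 0 0 \<noteq> 0" and "ft 0 0 \<noteq> 0"
    using assms(3-5) DERIV_imp_deriv[OF djj] DERIV_imp_deriv[OF dt] by auto
  define c where "c = \<bar>fjj 0 0\<bar> / 2"
  define d where "d = \<bar>ft 0 0\<bar> / 2"
  define M where "M = 3 * c + \<bar>fjt 0 0\<bar> + 1"
  have "c > 0" "d > 0" "M > 0"
    using \<open>fjj 0 0 \<noteq> 0\<close> \<open>ft 0 0 \<noteq> 0\<close> by (auto simp: c_def d_def M_def add_nonneg_pos)
  obtain e1 where "e1 > 0" and e1: "\<And>j t. \<bar>j\<bar> < e1 \<Longrightarrow> \<bar>t\<bar> < e1 \<Longrightarrow> \<bar>fjj j t - fjj 0 0\<bar> < c"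
    using continuous_on_UNIV_near_origin[OF \<open>continuous_on UNIV (\<lambda>z. fjj (fst z) (snd z))\<close> \<open>c > 0\<close>]
    by blast
  obtain e2 where "e2 > 0" and e2: "\<And>j t. \<bar>j\<bar> < e2 \<Longrightarrow> \<bar>t\<bar> < e2 \<Longrightarrow> \<bar>fjt j t - fjt 0 0\<bar> < 1"
    using continuous_on_UNIV_near_origin[OF \<open>continuous_on UNIV (\<lambda>z. fjt (fst z) (snd z))\<close> zero_less_one]
    by blast
  obtain e3 where "e3 > 0" and e3: "\<And>j t. \<bar>j\<bar> < e3 \<Longrightarrow> \<bar>t\<bar> < e3 \<Longrightarrow> \<bar>ft j t - ft 0 0\<bar> < d"
    using continuous_on_UNIV_near_origin[OF \<open>continuous_on UNIV (\<lambda>z. ft (fst z) (snd z))\<close> \<open>d > 0\<close>]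
    by blast
  define e where "e = min e1 (min e2 e3)"
  have bounds: "c \<le> \<bar>fjj j t\<bar> \<and> \<bar>fjj j t\<bar> \<le> M \<and> \<bar>fjt j t\<bar> \<le> M \<and> d \<le> \<bar>ft j t\<bar>"
    if "\<bar>j\<bar> < e" and "\<bar>t\<bar> < e" for j t
    using e1[of j t] e2[of j t] e3[of j t] that \<open>c > 0\<close>
    by (auto simp: e_def M_def c_def d_def abs_diff_less_iff abs_if split: if_splits)
  define \<delta> where "\<delta> = min e (d * c ^ 2 / M ^ 3)"
  have "\<delta> > 0"
    using \<open>e1 > 0\<close> \<open>e2 > 0\<close> \<open>e3 > 0\<close> \<open>c > 0\<close> \<open>d > 0\<close> \<open>M > 0\<close> by (simp add: \<delta>_def e_def)
  moreover have "fj j0 \<tau> \<noteq> 0" if "0 < \<bar>\<tau>\<bar>" "\<bar>\<tau>\<bar> < \<delta>" "\<bar>j0\<bar> < \<delta>" "\<nu> j0 \<tau> = 0" for \<tau> j0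
  proof
    assume "fj j0 \<tau> = 0"
    then have "d * c ^ 2 \<le> M ^ 3 * \<bar>\<tau>\<bar>"
      using that \<open>c > 0\<close> assms(2) \<open>fj 0 0 = 0\<close>
      by (intro double_root_parameter_bound[OF dj dt djj djt bounds]) (auto simp: \<delta>_def)
    moreover have "M ^ 3 * \<bar>\<tau>\<bar> < d * c ^ 2"
      using that(2) \<open>M > 0\<close> by (simp add: \<delta>_def pos_less_divide_eq mult.commute)
    ultimately show False
      by simp
  qed
  ultimately show ?thesis
    using dj by blast
qed

lemma simple_zero_sign_change:
  fixes f :: "real \<Rightarrow> real"
  assumes "(f has_real_derivative D) (at x)" and "D \<noteq> 0" and "f x = 0"
  shows "\<exists>\<epsilon>>0. \<exists>\<sigma>\<in>{-1, 1::real}. (\<forall>j. 0 < \<sigma> * (x - j) \<longrightarrow> \<sigma> * (x - j) < \<epsilon> \<longrightarrow> f j > 0) \<and>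
           (\<forall>j. 0 < \<sigma> * (j - x) \<longrightarrow> \<sigma> * (j - x) < \<epsilon> \<longrightarrow> f j < 0)"
proof (cases "D > 0")
  case True
  obtain e1 where "e1 > 0" and right: "\<And>h. 0 < h \<Longrightarrow> h < e1 \<Longrightarrow> f x < f (x + h)"
    using DERIV_pos_inc_right[OF assms(1) True] by blast
  obtain e2 where "e2 > 0" and left: "\<And>h. 0 < h \<Longrightarrow> h < e2 \<Longrightarrow> f (x - h) < f x"
    using DERIV_pos_inc_left[OF assms(1) True] by blast
  show ?thesis
    using right[of "_ - x"] left[of "x - _"] \<open>e1 > 0\<close> \<open>e2 > 0\<close> assms(3)
    by (intro exI[of _ "min e1 e2"] conjI bexI[of _ "-1"]) auto
next
  case False
  then have "D < 0"
    using assms(2) by simp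
  obtain e1 where "e1 > 0" and right: "\<And>h. 0 < h \<Longrightarrow> h < e1 \<Longrightarrow> f (x + h) < f x"
    using DERIV_neg_dec_right[OF assms(1) \<open>D < 0\<close>] by blast
  obtain e2 where "e2 > 0" and left: "\<And>h. 0 < h \<Longrightarrow> h < e2 \<Longrightarrow> f x < f (x - h)"
    using DERIV_neg_dec_left[OF assms(1) \<open>D < 0\<close>] by blast
  show ?thesis
    using right[of "_ - x"] left[of "x - _"] \<open>e1 > 0\<close> \<open>e2 > 0\<close> assms(3)
    by (intro exI[of _ "min e1 e2"] conjI bexI[of _ 1]) auto
qed

lemma flip_bif_at_simple_zero:
  assumes "a \<noteq> 0" and "b \<noteq> 0" and "smooth2 \<nu>2"
    and "D \<noteq> 0" and D: "((\<lambda>j. \<nu>1 j \<tau>) has_real_derivative D) (at j0)"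
    and "\<nu>1 j0 \<tau> = 0" and "\<nu>2 j0 \<tau> \<noteq> 0"
  shows "flip_bif (a * \<nu>2 j0 \<tau> < 0) (\<lambda>j. ham_vf (H_fam a b \<nu>1 \<nu>2 j \<tau>)) j0"
proof -
  have deriv: "((\<lambda>j. \<nu>1 j \<tau> * \<nu>2 j0 \<tau>) has_real_derivative D * \<nu>2 j0 \<tau>) (at j0)"
    using D by (rule DERIV_cmult_right)
  have "D * \<nu>2 j0 \<tau> \<noteq> 0" and "\<nu>1 j0 \<tau> * \<nu>2 j0 \<tau> = 0"
    using assms(4,6,7) by simp_all
  from simple_zero_sign_change[OF deriv this] obtain \<epsilon> where "\<epsilon> > 0 \<and> (\<exists>\<sigma>\<in>{-1, 1}.
      (\<forall>j. 0 < \<sigma> * (j0 - j) \<longrightarrow> \<sigma> * (j0 - j) < \<epsilon> \<longrightarrow> \<nu>1 j \<tau> * \<nu>2 j0 \<tau> > 0) \<and>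
      (\<forall>j. 0 < \<sigma> * (j - j0) \<longrightarrow> \<sigma> * (j - j0) < \<epsilon> \<longrightarrow> \<nu>1 j \<tau> * \<nu>2 j0 \<tau> < 0))"
    ..
  then obtain \<sigma> where "\<epsilon> > 0" and "\<sigma> \<in> {-1, 1}"
    and before: "\<forall>j. 0 < \<sigma> * (j0 - j) \<longrightarrow> \<sigma> * (j0 - j) < \<epsilon> \<longrightarrow> \<nu>1 j \<tau> * \<nu>2 j0 \<tau> > 0"
    and after: "\<forall>j. 0 < \<sigma> * (j - j0) \<longrightarrow> \<sigma> * (j - j0) < \<epsilon> \<longrightarrow> \<nu>1 j \<tau> * \<nu>2 j0 \<tau> < 0"
    by blast
  have "isCont (\<lambda>j. \<nu>1 j \<tau>) j0" and "isCont (\<lambda>j. \<nu>2 j \<tau>) j0"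
    using DERIV_isCont D assms(3) smooth2_isCont_first by blast+
  from flip_bif_sextic_vf[OF assms(1,2), of "\<lambda>j. \<nu>2 j \<tau>" j0 "\<lambda>j. \<nu>1 j \<tau>" \<epsilon> \<sigma>,
      OF assms(7) this(1) assms(6) this(2) \<open>\<epsilon> > 0\<close> \<open>\<sigma> \<in> {-1, 1}\<close> before[rule_format] after[rule_format]]
  show ?thesis
    unfolding ham_vf_H_fam .
qed

theorem lemma2p3:
  fixes a b :: real and \<nu>1 \<nu>2 :: "real \<Rightarrow> real \<Rightarrow> real"
  assumes "a \<noteq> 0" and "b \<noteq> 0"
    and "smooth2 \<nu>1" and "smooth2 \<nu>2"
    and "\<nu>1 0 0 = 0"
    and "deriv (\<lambda>j. \<nu>1 j 0) 0 = 0"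
    and "deriv (deriv (\<lambda>j. \<nu>1 j 0)) 0 \<noteq> 0"
    and "deriv (\<lambda>t. \<nu>1 0 t) 0 \<noteq> 0"
  shows "\<exists>\<delta>>0. \<forall>\<tau> j0. 0 < \<bar>\<tau>\<bar> \<and> \<bar>\<tau>\<bar> < \<delta> \<and> \<bar>j0\<bar> < \<delta> \<and>
            \<nu>1 j0 \<tau> = 0 \<and> \<nu>2 j0 \<tau> \<noteq> 0 \<longrightarrow>
          (a * \<nu>2 j0 \<tau> < 0 \<longrightarrow>
             dual_hamiltonian_flip (\<lambda>j. ham_vf (H_fam a b \<nu>1 \<nu>2 j \<tau>)) j0) \<and>
          (a * \<nu>2 j0 \<tau> > 0 \<longrightarrow>
             hamiltonian_flip (\<lambda>j. ham_vf (H_fam a b \<nu>1 \<nu>2 j \<tau>)) j0)"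
proof -
  obtain \<delta> where \<delta>: "\<delta> > 0 \<and> (\<forall>\<tau> j0. 0 < \<bar>\<tau>\<bar> \<and> \<bar>\<tau>\<bar> < \<delta> \<and> \<bar>j0\<bar> < \<delta> \<and> \<nu>1 j0 \<tau> = 0 \<longrightarrow>
      (\<exists>D. D \<noteq> 0 \<and> ((\<lambda>j. \<nu>1 j \<tau>) has_real_derivative D) (at j0)))"
    using simple_zeros_near_fold[OF assms(3,5-8)] ..
  have flip: "flip_bif (a * \<nu>2 j0 \<tau> < 0) (\<lambda>j. ham_vf (H_fam a b \<nu>1 \<nu>2 j \<tau>)) j0"
    if H: "0 < \<bar>\<tau>\<bar> \<and> \<bar>\<tau>\<bar> < \<delta> \<and> \<bar>j0\<bar> < \<delta> \<and> \<nu>1 j0 \<tau> = 0 \<and> \<nu>2 j0 \<tau> \<noteq> 0" for \<tau> j0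
  proof -
    obtain D where "D \<noteq> 0" and "((\<lambda>j. \<nu>1 j \<tau>) has_real_derivative D) (at j0)"
      using \<delta> H by blast
    with H show ?thesis
      using flip_bif_at_simple_zero[OF assms(1,2,4)] by blast
  qed
  show ?thesis
  proof (rule exI[of _ \<delta>], intro conjI allI impI)
    show "\<delta> > 0"
      using \<delta> by simp
  next
    fix \<tau> j0
    assume H: "0 < \<bar>\<tau>\<bar> \<and> \<bar>\<tau>\<bar> < \<delta> \<and> \<bar>j0\<bar> < \<delta> \<and> \<nu>1 j0 \<tau> = 0 \<and> \<nu>2 j0 \<tau> \<noteq> 0"
      and "a * \<nu>2 j0 \<tau> < 0"
    then show "dual_hamiltonian_flip (\<lambda>j. ham_vf (H_fam a b \<nu>1 \<nu>2 j \<tau>)) j0"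
      using flip[OF H] by simp
  next
    fix \<tau> j0
    assume H: "0 < \<bar>\<tau>\<bar> \<and> \<bar>\<tau>\<bar> < \<delta> \<and> \<bar>j0\<bar> < \<delta> \<and> \<nu>1 j0 \<tau> = 0 \<and> \<nu>2 j0 \<tau> \<noteq> 0"
      and "a * \<nu>2 j0 \<tau> > 0"
    then show "hamiltonian_flip (\<lambda>j. ham_vf (H_fam a b \<nu>1 \<nu>2 j \<tau>)) j0"
      using flip[OF H] by simp
  qed
qed

end
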